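(* Let $\Gamma$ be an embedded (ribbon) graph and let $a,b$ be two distinct edges of $\Gamma$ such that an end of $a$ and an end of $b$ are neighbors in the cyclic order at some vertex. Let $\Gamma'_{ab}$ be the ribbon graph obtained from $\Gamma$ by exchanging these two neighboring ends. Then $D(\Gamma'_{ab})=D(\Gamma)'_{ab}$.
   Context: An embedded (ribbon) graph is a connected graph cellularly embedded in a compact surface, orientable or not (edges are ribbons; loops may be orientable or half-twisted). Its delta-matroid is $D(\Gamma)=(E(\Gamma);\Phi(\Gamma))$, where $\phi\subseteq E(\Gamma)$ is feasible iff the spanning ribbon subgraph with all vertices of $\Gamma$ and edge set $\phi$ has boundary consisting of exactly one connected component. For a set system $D=(E;\Phi)$ and distinct $a,b\in E$: the twist is $D*E'=(E;\{\phi\Delta E'\mid\phi\in\Phi\})$; the sliding of $a$ over $b$ is $\widetilde D_{ab}=(E;\Phi\,\Delta\,\{\phi\sqcup\{a\}\mid\phi\subseteq E\setminus\{a,b\},\ \phi\sqcup\{b\}\in\Phi\})$; and $D'_{ab}=\big(\widetilde{(D*\{b\})}_{ab}\big)*\{b\}$. *)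

theory Defs
  imports Main
begin

text \<open>Combinatorial model of embedded (ribbon) graphs, orientable or not:
  graph-encoded maps (gems). A map is a finite set of flags with three
  fixed-point-free involutions; \<open>r0\<close> changes the vertex (moves along the edge),
  \<open>r1\<close> changes the edge (corners at a vertex), \<open>r2\<close> changes the side of the
  edge (the two flags of a half-edge). Vertices are orbits of r1,r2; edges are
  orbits of r0,r2 (four flags each); faces are orbits of r0,r1.\<close>

record 'f rmap =
  flags :: "'f set"
  r0 :: "'f \<Rightarrow> 'f"
  r1 :: "'f \<Rightarrow> 'f"
  r2 :: "'f \<Rightarrow> 'f"

definition fpf_involution_on :: "'f set \<Rightarrow> ('f \<Rightarrow> 'f) \<Rightarrow> bool" where
  "fpf_involution_on F s \<longleftrightarrow> (\<forall>x\<in>F. s x \<in> F \<and> s (s x) = x \<and> s x \<noteq> x)"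

definition gen_rel :: "'f set \<Rightarrow> ('f \<Rightarrow> 'f) list \<Rightarrow> ('f \<times> 'f) set" where
  "gen_rel F gs = {(x, g x) | x g. x \<in> F \<and> g \<in> set gs}"

definition num_orbits :: "'f set \<Rightarrow> ('f \<Rightarrow> 'f) list \<Rightarrow> nat" where
  "num_orbits F gs = card (F // ((gen_rel F gs)\<^sup>*))"

definition ribbon_graph :: "('f, 'z) rmap_scheme \<Rightarrow> bool" where
  "ribbon_graph G \<longleftrightarrow>
     finite (flags G) \<and> flags G \<noteq> {} \<and>
     fpf_involution_on (flags G) (r0 G) \<and>
     fpf_involution_on (flags G) (r1 G) \<and>
     fpf_involution_on (flags G) (r2 G) \<and>
     (\<forall>x\<in>flags G. r0 G (r2 G x) = r2 G (r0 G x) \<and> r0 G (r2 G x) \<noteq> x) \<and>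
     num_orbits (flags G) [r0 G, r1 G, r2 G] = 1"

definition edge_of :: "('f, 'z) rmap_scheme \<Rightarrow> 'f \<Rightarrow> 'f set" where
  "edge_of G x = {x, r0 G x, r2 G x, r0 G (r2 G x)}"

definition edges :: "('f, 'z) rmap_scheme \<Rightarrow> 'f set set" where
  "edges G = edge_of G ` flags G"

text \<open>Boundary components of the spanning ribbon subgraph with edge set phi:
  at flags of deleted edges the boundary passes across the vertex disc (r2)
  instead of running along the edge (r0); isolated vertices give one
  component each.\<close>
definition sub_r0 :: "('f, 'z) rmap_scheme \<Rightarrow> 'f set set \<Rightarrow> 'f \<Rightarrow> 'f" where
  "sub_r0 G phi x = (if edge_of G x \<in> phi then r0 G x else r2 G x)"

definition num_boundary_components :: "('f, 'z) rmap_scheme \<Rightarrow> 'f set set \<Rightarrow> nat" where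
  "num_boundary_components G phi = num_orbits (flags G) [sub_r0 G phi, r1 G]"

type_synonym 'e set_system = "'e set \<times> 'e set set"

definition delta_matroid_of :: "('f, 'z) rmap_scheme \<Rightarrow> 'f set set_system" where
  "delta_matroid_of G =
     (edges G, {phi. phi \<subseteq> edges G \<and> num_boundary_components G phi = 1})"

definition symdiff :: "'a set \<Rightarrow> 'a set \<Rightarrow> 'a set" where
  "symdiff A B = (A - B) \<union> (B - A)"

definition twist :: "'e set_system \<Rightarrow> 'e set \<Rightarrow> 'e set_system" where
  "twist D E' = (fst D, (\<lambda>phi. symdiff phi E') ` snd D)"

definition slide :: "'e set_system \<Rightarrow> 'e \<Rightarrow> 'e \<Rightarrow> 'e set_system" where
  "slide D a b = (fst D, symdiff (snd D)
      {phi \<union> {a} | phi. phi \<subseteq> fst D - {a, b} \<and> phi \<union> {b} \<in> snd D})"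

definition Dprime :: "'e set_system \<Rightarrow> 'e \<Rightarrow> 'e \<Rightarrow> 'e set_system" where
  "Dprime D a b = twist (slide (twist D {b}) a b) {b}"

text \<open>Flag x lies on (the half-edge of) edge a and
  r1 x on edge b, so these ends are neighbours at the corner {x, r1 x}. Around
  the vertex the flags read  p | a1 a2 | b1 b2 | n  with a2 = x, b1 = r1 x,
  a1 = r2 x, b2 = r2 b1, p = r1 a1, n = r1 b2. Sliding the end of a past the end
  of b along the vertex boundary gives  p | b1 b2 | a1 a2 | n. If the vertex has
  only these two ends (n = a1) the cyclic order is unchanged.\<close>
definition exchange_r1 :: "('f, 'z) rmap_scheme \<Rightarrow> 'f \<Rightarrow> 'f \<Rightarrow> 'f" where
  "exchange_r1 G x =
    (let a2 = x; b1 = r1 G x; a1 = r2 G x; b2 = r2 G b1;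
         p = r1 G a1; n = r1 G b2 in
     if n = a1 then r1 G
     else (\<lambda>y. if y = p then b1 else if y = b1 then p
              else if y = b2 then a1 else if y = a1 then b2
              else if y = a2 then n else if y = n then a2
              else r1 G y))"

definition exchange_ends :: "('f, 'z) rmap_scheme \<Rightarrow> 'f \<Rightarrow> ('f, 'z) rmap_scheme" where
  "exchange_ends G x = G\<lparr>r1 := exchange_r1 G x\<rparr>"

end

theory Submission
  imports Defs
begin

text \<open>Feasibility of phi means that the two involutions sub_r0 phi and r1 have a single
  orbit on the flags. The exchange changes r1 only at the six flags p, b1, b2, a1, a2, n
  around the corner. If a or b is not in phi, the two flags of that edge at the vertex
  merely link their neighbours, in the same way before and after the exchange. If both
  are in phi, we contract the flags a1, a2, b1, b2 and keep six ports. The remaining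
  orbits pair the ports by an involution \<pi>, and each of (\<Gamma>, phi), (\<Gamma>', phi) and
  (\<Gamma>, phi - {a, b}) reconnects the ports by its own perfect matching; the result is
  connected iff every flag reaches a port and the matching shares no pair with \<pi>.
  Of the three matchings, the one of \<Gamma>' avoids \<pi> iff exactly one of the other two
  does, which is the feasibility rule of the twisted slide D'_ab.\<close>

definition connected_on :: "'a set \<Rightarrow> ('a \<times> 'a) set \<Rightarrow> bool" where
  "connected_on A R \<longleftrightarrow> (\<forall>x\<in>A. \<forall>y\<in>A. (x, y) \<in> R\<^sup>*)"

lemma card_quotient_rtrancl_eq_1_iff:
  assumes "A \<noteq> {}"
  shows "card (A // R\<^sup>*) = 1 \<longleftrightarrow> connected_on A R"
proof
  assume "card (A // R\<^sup>*) = 1"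
  then obtain X where X: "A // R\<^sup>* = {X}" by (meson card_1_singletonE)
  have cls: "R\<^sup>* `` {x} = X" if "x \<in> A" for x
    using quotientI[OF that, of "R\<^sup>*"] X by simp
  show "connected_on A R" unfolding connected_on_def
  proof (intro ballI)
    fix x y assume "x \<in> A" "y \<in> A"
    have "y \<in> R\<^sup>* `` {x}" using cls[OF \<open>x \<in> A\<close>] cls[OF \<open>y \<in> A\<close>] by blast
    then show "(x, y) \<in> R\<^sup>*" by simp
  qed
next
  assume c: "connected_on A R"
  obtain x0 where x0: "x0 \<in> A" using assms by blast
  have eq: "R\<^sup>* `` {x} = R\<^sup>* `` {x0}" if "x \<in> A" for x
  proof -
    have "(x, x0) \<in> R\<^sup>*" "(x0, x) \<in> R\<^sup>*" using c that x0 unfolding connected_on_def by blast+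
    then show ?thesis by (blast intro: rtrancl_trans)
  qed
  have "A // R\<^sup>* = {R\<^sup>* `` {x0}}"
  proof
    show "A // R\<^sup>* \<subseteq> {R\<^sup>* `` {x0}}" using eq by (auto elim!: quotientE)
    show "{R\<^sup>* `` {x0}} \<subseteq> A // R\<^sup>*" using x0 by (simp add: quotientI)
  qed
  then show "card (A // R\<^sup>*) = 1" by simp
qed

lemma equiv_rtrancl_sym: "sym R \<Longrightarrow> equiv UNIV (R\<^sup>*)"
  by (simp add: equivI refl_rtrancl sym_rtrancl trans_rtrancl)

lemma rtrancl_insert_edge_subset:
  assumes "sym R"
  shows "(R \<union> {(x, y), (y, x)})\<^sup>* \<subseteq> R\<^sup>* \<union>
    (R\<^sup>* `` {x} \<union> R\<^sup>* `` {y}) \<times> (R\<^sup>* `` {x} \<union> R\<^sup>* `` {y})" (is "_ \<subseteq> _ \<union> ?C \<times> ?C")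
proof (rule subrelI)
  fix z w assume zw: "(z, w) \<in> (R \<union> {(x, y), (y, x)})\<^sup>*"
  have symR: "(u, v) \<in> R\<^sup>* \<Longrightarrow> (v, u) \<in> R\<^sup>*" for u v
    using assms(1) by (meson sym_rtrancl symD)
  from zw show "(z, w) \<in> R\<^sup>* \<union> ?C \<times> ?C"
  proof (induction rule: rtrancl_induct)
    case (step u v)
    show ?case
    proof (cases "(u, v) \<in> R")
      case True
      with step.IH show ?thesis by (blast intro: rtrancl_into_rtrancl)
    next
      case False
      with step.hyps(2) have "(u, v) = (x, y) \<or> (u, v) = (y, x)" by blast
      with step.IH symR show ?thesis by blast
    qed
  qed simp
qed

lemma card_quotient_le_insert_edge:
  assumes "sym R" and "finite A" and "x \<in> A"
  shows "card (A // R\<^sup>*) \<le> card (A // (R \<union> {(x, y), (y, x)})\<^sup>*) + 1"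
proof -
  let ?R' = "R \<union> {(x, y), (y, x)}"
  have eqR: "equiv UNIV (R\<^sup>*)" using assms(1) by (rule equiv_rtrancl_sym)
  have RR': "R\<^sup>* \<subseteq> ?R'\<^sup>*" by (rule rtrancl_mono) blast
  have class': "?R'\<^sup>* `` (R\<^sup>* `` {z}) = ?R'\<^sup>* `` {z}" for z
    using RR' by (blast intro: rtrancl_trans)
  let ?old = "A // R\<^sup>* - {R\<^sup>* `` {x}}"
  have "inj_on (\<lambda>X. ?R'\<^sup>* `` X) ?old"
  proof (rule inj_onI)
    fix X Y assume X: "X \<in> ?old" and Y: "Y \<in> ?old" and eq: "?R'\<^sup>* `` X = ?R'\<^sup>* `` Y"
    obtain z where z: "X = R\<^sup>* `` {z}" using X by (blast elim: quotientE)
    obtain w where w: "Y = R\<^sup>* `` {w}" using Y by (blast elim: quotientE)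
    have zx: "(x, z) \<notin> R\<^sup>*" and wx: "(x, w) \<notin> R\<^sup>*"
      using X Y z w equiv_class_eq[OF eqR] by blast+
    have "(z, w) \<in> ?R'\<^sup>*" using eq z w class' by (metis Image_singleton_iff rtrancl.rtrancl_refl)
    then have "(z, w) \<in> R\<^sup>* \<or> (y, z) \<in> R\<^sup>* \<and> (y, w) \<in> R\<^sup>*"
      using rtrancl_insert_edge_subset[OF assms(1), of x y] zx wx by blast
    then have "(z, w) \<in> R\<^sup>*"
      using assms(1) by (meson rtrancl_trans sym_rtrancl symD)
    then show "X = Y" using z w equiv_class_eq[OF eqR] by simp
  qed
  moreover have "(\<lambda>X. ?R'\<^sup>* `` X) ` ?old \<subseteq> A // ?R'\<^sup>*"
    using class' by (auto elim!: quotientE intro: quotientI)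
  moreover have "finite (A // ?R'\<^sup>*)" using assms(2) by (simp add: quotient_def)
  ultimately have "card ?old \<le> card (A // ?R'\<^sup>*)"
    by (metis card_image card_mono)
  moreover have "card (A // R\<^sup>*) \<le> card ?old + 1"
  proof -
    have "finite (A // R\<^sup>*)" using assms(2) by (simp add: quotient_def)
    then show ?thesis by (auto simp: card_Diff_singleton_if card_gt_0_iff)
  qed
  ultimately show ?thesis by simp
qed

definition edge_rel :: "'a set set \<Rightarrow> ('a \<times> 'a) set" where
  "edge_rel E = {(x, y). {x, y} \<in> E}"

lemma sym_edge_rel: "sym (edge_rel E)"
  unfolding edge_rel_def sym_def by (simp add: insert_commute)

lemma card_le_card_quotient_add_card_edges:
  assumes "finite E" "finite A" "\<forall>e\<in>E. \<exists>x y. e = {x, y} \<and> x \<in> A"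
  shows "card A \<le> card (A // (edge_rel E)\<^sup>*) + card E"
  using assms(1,3)
proof (induction E rule: finite_induct)
  case empty
  have "A // (edge_rel {})\<^sup>* = (\<lambda>x. {x}) ` A"
    unfolding edge_rel_def quotient_def by auto
  then show ?case by (simp add: card_image)
next
  case (insert e E)
  then obtain x y where e: "e = {x, y}" "x \<in> A" by blast
  have "edge_rel (insert e E) = edge_rel E \<union> {(x, y), (y, x)}"
    unfolding e edge_rel_def by (auto simp: doubleton_eq_iff)
  then show ?case
    using insert card_quotient_le_insert_edge[OF sym_edge_rel assms(2) e(2), of E y]
    by (simp add: card_insert_if)
qed

lemma card_fpf_involution:
  assumes "finite D" "fpf_involution_on D f"
  shows "card D = 2 * card ((\<lambda>x. {x, f x}) ` D)"
  using assms unfolding fpf_involution_on_def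
proof (induction "card D" arbitrary: D rule: less_induct)
  case less
  show ?case
  proof (cases "D = {}")
    case True then show ?thesis by simp
  next
    case False
    then obtain x where x: "x \<in> D" by blast
    define D' where "D' = D - {x, f x}"
    have fx: "f x \<in> D" "f x \<noteq> x" "f (f x) = x" using less.prems x by auto
    have sub2: "{x, f x} \<subseteq> D" using fx x by simp
    have c2: "card {x, f x} = 2" using fx by simp
    have cD: "card D = card D' + 2" using card_Diff_subset[OF _ sub2] c2 card_mono[OF less.prems(1) sub2]
      less.prems(1) unfolding D'_def by simp
    have pD': "\<forall>z\<in>D'. f z \<in> D' \<and> f (f z) = z \<and> f z \<noteq> z"
      unfolding D'_def using less.prems(2) fx by (metis Diff_iff insertCI insertE singleton_iff)
    have IH: "card D' = 2 * card ((\<lambda>x. {x, f x}) ` D')"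
      using less.hyps[of D'] cD pD' less.prems(1) unfolding D'_def by simp
    have img: "(\<lambda>x. {x, f x}) ` D = insert {x, f x} ((\<lambda>x. {x, f x}) ` D')"
    proof
      show "(\<lambda>x. {x, f x}) ` D \<subseteq> insert {x, f x} ((\<lambda>x. {x, f x}) ` D')"
      proof
        fix e assume "e \<in> (\<lambda>x. {x, f x}) ` D"
        then obtain z where z: "z \<in> D" "e = {z, f z}" by blast
        show "e \<in> insert {x, f x} ((\<lambda>x. {x, f x}) ` D')"
        proof (cases "z = x \<or> z = f x")
          case True then show ?thesis using z fx by auto
        next
          case False then show ?thesis using z unfolding D'_def by auto
        qed
      qed
      show "insert {x, f x} ((\<lambda>x. {x, f x}) ` D') \<subseteq> (\<lambda>x. {x, f x}) ` D"
        using x unfolding D'_def by auto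
    qed
    have notin: "{x, f x} \<notin> (\<lambda>x. {x, f x}) ` D'"
    proof
      assume "{x, f x} \<in> (\<lambda>x. {x, f x}) ` D'"
      then obtain z where "z \<in> D'" "{x, f x} = {z, f z}" by blast
      then show False unfolding D'_def by (auto simp: doubleton_eq_iff)
    qed
    have fin: "finite ((\<lambda>x. {x, f x}) ` D')" using less.prems(1) unfolding D'_def by simp
    show ?thesis using IH cD img notin fin by simp
  qed
qed

text \<open>The graph has (card Cs + card Ct) / 2 edges, and being connected at least card C - 1.\<close>
lemma connected_two_involutions_card_bound:
  assumes fin: "finite C" and sub: "Cs \<subseteq> C" "Ct \<subseteq> C"
    and invs: "fpf_involution_on Cs s" and invt: "fpf_involution_on Ct t"
    and conn: "connected_on C (edge_rel ((\<lambda>x. {x, s x}) ` Cs \<union> (\<lambda>x. {x, t x}) ` Ct))"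
  shows "2 * card C \<le> card Cs + card Ct + 2"
proof (cases "C = {}")
  case False
  let ?E = "(\<lambda>x. {x, s x}) ` Cs \<union> (\<lambda>x. {x, t x}) ` Ct"
  have fs: "finite Cs" "finite Ct" using fin sub finite_subset by auto
  have "card C \<le> card (C // (edge_rel ?E)\<^sup>*) + card ?E"
    using fs fin sub by (intro card_le_card_quotient_add_card_edges) blast+
  also have "card (C // (edge_rel ?E)\<^sup>*) = 1"
    using card_quotient_rtrancl_eq_1_iff[OF False] conn by simp
  also have "card ?E \<le> card ((\<lambda>x. {x, s x}) ` Cs) + card ((\<lambda>x. {x, t x}) ` Ct)"
    by (rule card_Un_le)
  finally show ?thesis
    using card_fpf_involution[OF fs(1) invs] card_fpf_involution[OF fs(2) invt] by simp
qed simp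

lemma connected_on_iff_retract:
  assumes F0: "F0 \<subseteq> F" and fF: "\<forall>x\<in>F. f x \<in> F0" and fid: "\<forall>x\<in>F0. f x = x"
    and edge: "\<forall>x y. (x,y) \<in> R \<longrightarrow> (f x, f y) \<in> Q\<^sup>*"
    and QR: "Q \<subseteq> R\<^sup>*"
    and bk: "\<forall>x\<in>F. (x, f x) \<in> R\<^sup>* \<and> (f x, x) \<in> R\<^sup>*"
  shows "connected_on F R \<longleftrightarrow> connected_on F0 Q"
proof
  assume c: "connected_on F R"
  show "connected_on F0 Q" unfolding connected_on_def
  proof (intro ballI)
    fix x y assume x: "x \<in> F0" and y: "y \<in> F0"
    have "(x,y) \<in> R\<^sup>*" using c x y F0 unfolding connected_on_def by blast
    then have "(f x, f y) \<in> Q\<^sup>*"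
    proof (induction rule: rtrancl_induct)
      case base then show ?case by simp
    next
      case (step u v)
      then have "(f u, f v) \<in> Q\<^sup>*" using edge by blast
      then show ?case using step.IH by (rule rtrancl_trans[rotated])
    qed
    then show "(x,y) \<in> Q\<^sup>*" using fid x y by simp
  qed
next
  assume c: "connected_on F0 Q"
  have QR': "Q\<^sup>* \<subseteq> R\<^sup>*"
  proof -
    have "Q\<^sup>* \<subseteq> (R\<^sup>*)\<^sup>*" using QR by (rule rtrancl_mono)
    then show ?thesis by simp
  qed
  show "connected_on F R" unfolding connected_on_def
  proof (intro ballI)
    fix x y assume x: "x \<in> F" and y: "y \<in> F"
    have 1: "(x, f x) \<in> R\<^sup>*" using bk x by blast
    have 2: "(f y, y) \<in> R\<^sup>*" using bk y by blast
    have "(f x, f y) \<in> Q\<^sup>*" using c fF x y unfolding connected_on_def by blast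
    then have 3: "(f x, f y) \<in> R\<^sup>*" using QR' by blast
    show "(x,y) \<in> R\<^sup>*" using 1 2 3 by (meson rtrancl_trans)
  qed
qed

lemma gen_rel_two_iff: "(u, v) \<in> gen_rel F [g, h] \<longleftrightarrow> u \<in> F \<and> (v = g u \<or> v = h u)"
  unfolding gen_rel_def by auto

lemma sym_gen_rel_two:
  assumes "\<forall>u\<in>F. g u \<in> F \<and> g (g u) = u" "\<forall>u\<in>F. h u \<in> F \<and> h (h u) = u"
  shows "sym (gen_rel F [g, h])"
  unfolding sym_def gen_rel_two_iff using assms by metis

text \<open>Contracting F - F0 onto F0 along f: connectivity of the orbits of two involutions can
  be read off a relation Q on F0 that contains their steps inside F0 and the contracted
  images of the steps leaving F0.\<close>
lemma connected_on_gen_rel_iff_retract: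
  assumes invg: "\<forall>u\<in>F. g u \<in> F \<and> g (g u) = u" and invh: "\<forall>u\<in>F. h u \<in> F \<and> h (h u) = u"
    and F0: "F0 \<subseteq> F" and f_in: "\<forall>y\<in>F. f y \<in> F0" and f_id: "\<forall>y\<in>F0. f y = y"
    and symQ: "sym Q"
    and inner: "\<forall>u\<in>F0. \<forall>v\<in>{g u, h u}. v \<in> F0 \<longrightarrow> (u, v) \<in> Q"
    and outer: "\<forall>u\<in>F - F0. \<forall>v\<in>{g u, h u}. f u = f v \<or> (f u, f v) \<in> Q"
    and QR: "Q \<subseteq> (gen_rel F [g, h])\<^sup>*"
    and f_path: "\<forall>y\<in>F - F0. (y, f y) \<in> (gen_rel F [g, h])\<^sup>*"
  shows "connected_on F (gen_rel F [g, h]) \<longleftrightarrow> connected_on F0 Q"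
proof (rule connected_on_iff_retract[OF F0 f_in f_id _ QR])
  let ?R = "gen_rel F [g, h]"
  have symRs: "(u, v) \<in> ?R\<^sup>* \<Longrightarrow> (v, u) \<in> ?R\<^sup>*" for u v
    using sym_gen_rel_two[OF invg invh] by (meson sym_rtrancl symD)
  show "\<forall>y\<in>F. (y, f y) \<in> ?R\<^sup>* \<and> (f y, y) \<in> ?R\<^sup>*"
    using f_path f_id symRs by (metis Diff_iff rtrancl.rtrancl_refl)
  show "\<forall>u v. (u, v) \<in> ?R \<longrightarrow> (f u, f v) \<in> Q\<^sup>*"
  proof (intro allI impI)
    fix u v assume "(u, v) \<in> ?R"
    then have u: "u \<in> F" and v: "v = g u \<or> v = h u" unfolding gen_rel_two_iff by auto
    then have vF: "v \<in> F" and uv: "u = g v \<or> u = h v" using invg invh by auto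
    consider "u \<in> F0" "v \<in> F0" | "u \<notin> F0" | "u \<in> F0" "v \<notin> F0" by blast
    then show "(f u, f v) \<in> Q\<^sup>*"
    proof cases
      case 1
      then show ?thesis using inner v f_id by auto
    next
      case 2
      then have "f u = f v \<or> (f u, f v) \<in> Q" using outer u v by blast
      then show ?thesis by auto
    next
      case 3
      then have "f v = f u \<or> (f v, f u) \<in> Q" using outer vF uv by blast
      then show ?thesis using symQ by (metis r_into_rtrancl rtrancl.rtrancl_refl symD)
    qed
  qed
qed

text \<open>A component of two fixed-point-free involutions restricted to A is a path or a cycle:
  it has at most two ends (elements whose s- or t-partner leaves A), and an even number.\<close>
lemma component_restrict_card_bound:
  assumes invs: "fpf_involution_on F s" and invt: "fpf_involution_on F t"
    and A: "finite A" "A \<subseteq> F" and v: "v \<in> A"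
  defines "C \<equiv> {y \<in> A. (v, y) \<in> (gen_rel F [s, t] \<inter> A \<times> A)\<^sup>*}"
  shows "2 * card C \<le> card {y \<in> C. s y \<in> A} + card {y \<in> C. t y \<in> A} + 2"
    and "even (card {y \<in> C. s y \<in> A})" and "even (card {y \<in> C. t y \<in> A})"
proof -
  let ?K = "gen_rel F [s, t] \<inter> A \<times> A"
  define Cs where "Cs = {y \<in> C. s y \<in> A}"
  define Ct where "Ct = {y \<in> C. t y \<in> A}"
  have CA: "C \<subseteq> A" unfolding C_def by auto
  have finC: "finite C" using CA A(1) by (rule finite_subset)
  have KC: "w \<in> C" if "u \<in> C" "(u, w) \<in> ?K" for u w
  proof -
    have "(v, u) \<in> ?K\<^sup>*" using that(1) unfolding C_def by simp
    then have "(v, w) \<in> ?K\<^sup>*" using that(2) by (rule rtrancl_into_rtrancl)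
    then show ?thesis using that(2) unfolding C_def by blast
  qed
  have inv: "\<forall>y\<in>{y \<in> C. g y \<in> A}. g y \<in> {y \<in> C. g y \<in> A} \<and> g (g y) = y \<and> g y \<noteq> y"
    if g: "g = s \<or> g = t" for g
  proof
    fix y assume "y \<in> {y \<in> C. g y \<in> A}"
    then have y: "y \<in> C" "g y \<in> A" "y \<in> A" "y \<in> F" using CA A(2) by auto
    have gy: "g (g y) = y" "g y \<noteq> y"
      using g invs invt y(4) unfolding fpf_involution_on_def by auto
    have "(y, g y) \<in> ?K" using g y by (auto simp: gen_rel_two_iff)
    then have "g y \<in> C" by (rule KC[OF y(1)])
    then show "g y \<in> {y \<in> C. g y \<in> A} \<and> g (g y) = y \<and> g y \<noteq> y" using gy y by simp
  qed
  have inv_C: "fpf_involution_on Cs s" "fpf_involution_on Ct t"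
    using inv[of s] inv[of t] unfolding Cs_def Ct_def fpf_involution_on_def by blast+
  let ?E = "(\<lambda>x. {x, s x}) ` Cs \<union> (\<lambda>x. {x, t x}) ` Ct"
  have reach: "(v, y) \<in> (edge_rel ?E)\<^sup>*" if "(v, y) \<in> ?K\<^sup>*" for y
    using that
  proof (induction rule: rtrancl_induct)
    case (step u w)
    then have "u \<in> C" unfolding C_def by simp
    moreover have "u \<in> F" "w \<in> A" "w = s u \<or> w = t u"
      using step.hyps(2) by (auto simp: gen_rel_two_iff)
    ultimately have "{u, w} \<in> ?E" unfolding Cs_def Ct_def by auto
    then have "(u, w) \<in> edge_rel ?E" unfolding edge_rel_def by auto
    then show ?case using step.IH by (rule rtrancl_into_rtrancl[rotated])
  qed simp
  have conn: "connected_on C (edge_rel ?E)" unfolding connected_on_def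
  proof (intro ballI)
    fix y z assume "y \<in> C" "z \<in> C"
    then have vy: "(v, y) \<in> (edge_rel ?E)\<^sup>*" and vz: "(v, z) \<in> (edge_rel ?E)\<^sup>*"
      using reach unfolding C_def by auto
    have "sym ((edge_rel ?E)\<^sup>*)" by (rule sym_rtrancl[OF sym_edge_rel])
    then have "(y, v) \<in> (edge_rel ?E)\<^sup>*" using vy by (rule symD)
    then show "(y, z) \<in> (edge_rel ?E)\<^sup>*" using vz by (rule rtrancl_trans)
  qed
  have sub: "Cs \<subseteq> C" "Ct \<subseteq> C" unfolding Cs_def Ct_def by auto
  show "2 * card C \<le> card {y \<in> C. s y \<in> A} + card {y \<in> C. t y \<in> A} + 2"
    using connected_two_involutions_card_bound[OF finC sub inv_C conn] unfolding Cs_def Ct_def .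
  have "finite Cs" "finite Ct" using finC sub by (auto intro: finite_subset)
  then have "card Cs = 2 * card ((\<lambda>x. {x, s x}) ` Cs)" "card Ct = 2 * card ((\<lambda>x. {x, t x}) ` Ct)"
    using card_fpf_involution inv_C by blast+
  then show "even (card {y \<in> C. s y \<in> A})" "even (card {y \<in> C. t y \<in> A})"
    unfolding Cs_def Ct_def by simp_all
qed

datatype port = LP | LN | LA1 | LA2 | LB1 | LB2

lemma UNIV_port: "(UNIV :: port set) = {LP, LN, LA1, LA2, LB1, LB2}"
  using port.exhaust by auto

instance port :: finite
  by standard (simp add: UNIV_port)

lemma all_port: "(\<forall>l. P l) \<longleftrightarrow> P LP \<and> P LN \<and> P LA1 \<and> P LA2 \<and> P LB1 \<and> P LB2"
  by (metis port.exhaust)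

lemma fpf_involution_on_UNIV:
  "fpf_involution_on UNIV f \<longleftrightarrow> (\<forall>l. f l \<noteq> l \<and> f (f l) = l)"
  unfolding fpf_involution_on_def by auto

text \<open>Two perfect matchings of six points without a common edge form a hexagon:
  the component of l is closed under both and has at least four points, the
  complement is closed as well and, if nonempty, has at least three.\<close>
lemma rtrancl_two_port_matchings_total:
  fixes \<pi> m :: "port \<Rightarrow> port"
  assumes pi: "fpf_involution_on UNIV \<pi>" and m: "fpf_involution_on UNIV m"
    and disj: "\<forall>l. m l \<noteq> \<pi> l"
  shows "(l, l') \<in> ({(l, \<pi> l) | l. True} \<union> {(l, m l) | l. True})\<^sup>*"
proof (rule ccontr)
  let ?L = "{(l, \<pi> l) | l. True} \<union> {(l, m l) | l. True}"
  define S where "S = ?L\<^sup>* `` {l}"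
  have pi': "\<forall>l. \<pi> l \<noteq> l \<and> \<pi> (\<pi> l) = l" and m': "\<forall>l. m l \<noteq> l \<and> m (m l) = l"
    using pi m by (simp_all add: fpf_involution_on_UNIV)
  have Spi: "\<pi> y \<in> S" and Sm: "m y \<in> S" if "y \<in> S" for y
  proof -
    have "(y, \<pi> y) \<in> ?L" "(y, m y) \<in> ?L" by blast+
    then show "\<pi> y \<in> S" "m y \<in> S"
      using that unfolding S_def by (meson Image_singleton_iff rtrancl_into_rtrancl)+
  qed
  assume "(l, l') \<notin> ?L\<^sup>*"
  then have l'S: "l' \<notin> S" unfolding S_def by simp
  define x1 where "x1 = m l"
  define x2 where "x2 = \<pi> x1"
  define x3 where "x3 = m x2"
  have "{l, x1, x2, x3} \<subseteq> S"
    using Spi Sm unfolding S_def x1_def x2_def x3_def by blast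
  moreover have "card {l, x1, x2, x3} = 4"
  proof -
    have "l \<noteq> x1" "x1 \<noteq> x2" "x2 \<noteq> x3" "l \<noteq> x2"
      using pi' m' disj unfolding x1_def x2_def x3_def by metis+
    moreover have "x1 \<noteq> x3" "l \<noteq> x3"
      using m' \<open>l \<noteq> x2\<close> \<open>x1 \<noteq> x2\<close> unfolding x3_def x1_def by metis+
    ultimately show ?thesis by simp
  qed
  moreover have "{l', \<pi> l', m l'} \<subseteq> - S"
  proof -
    have "\<pi> l' \<notin> S" "m l' \<notin> S" using l'S Spi Sm pi' m' by metis+
    then show ?thesis using l'S by blast
  qed
  moreover have "card {l', \<pi> l', m l'} = 3"
  proof -
    have "l' \<noteq> \<pi> l'" "l' \<noteq> m l'" "\<pi> l' \<noteq> m l'" using pi' m' disj by metis+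
    then show ?thesis by simp
  qed
  moreover have "card S + card (- S) = 6"
  proof -
    have "card (S \<union> - S) = card S + card (- S)"
      by (rule card_Un_disjoint) simp_all
    then show ?thesis by (simp add: UNIV_port)
  qed
  ultimately show False
    using card_mono[of S "{l, x1, x2, x3}"] card_mono[of "- S" "{l', \<pi> l', m l'}"]
    by simp
qed

definition port_matching :: "(port \<Rightarrow> 'a) \<Rightarrow> (port \<Rightarrow> port) \<Rightarrow> ('a \<times> 'a) set" where
  "port_matching vert m = (\<lambda>l. (vert l, vert (m l))) ` UNIV"

lemma sym_port_matching:
  assumes "fpf_involution_on UNIV m"
  shows "sym (port_matching vert m)"
proof (rule symI)
  fix u v assume "(u, v) \<in> port_matching vert m"
  then obtain l where "u = vert l" "v = vert (m l)" unfolding port_matching_def by blast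
  moreover have "m (m l) = l" using assms unfolding fpf_involution_on_UNIV by blast
  ultimately have "(v, u) = (vert (m l), vert (m (m l)))" by simp
  then show "(v, u) \<in> port_matching vert m"
    unfolding port_matching_def by (rule image_eqI) simp
qed

lemma rtrancl_Un_port_matching_reaches_port:
  assumes "sym K" and "(vert l0, v) \<in> (K \<union> port_matching vert m)\<^sup>*"
  shows "\<exists>l. (v, vert l) \<in> K\<^sup>*"
  using assms(2)
proof (induction rule: rtrancl_induct)
  case (step y z)
  then obtain l where l: "(y, vert l) \<in> K\<^sup>*" by blast
  from step.hyps(2) show ?case
  proof
    assume "(y, z) \<in> K"
    then have "(z, y) \<in> K" using assms(1) by (meson symD)
    then show ?case using l by (meson converse_rtrancl_into_rtrancl)
  next
    assume "(y, z) \<in> port_matching vert m"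
    then show ?case unfolding port_matching_def by blast
  qed
qed blast

text \<open>If m pairs some port i with its K-partner \<pi> i, the ports i and \<pi> i together with
  everything K-connected to them form a closed part that misses the other four ports.\<close>
lemma not_connected_on_Un_port_matching:
  assumes symK: "sym K" and vert: "\<forall>l. vert l \<in> F0"
    and pi: "fpf_involution_on UNIV \<pi>" and m: "fpf_involution_on UNIV m"
    and piK: "\<forall>l l'. (vert l, vert l') \<in> K\<^sup>* \<longleftrightarrow> l' = l \<or> l' = \<pi> l"
    and mi: "m i = \<pi> i"
  shows "\<not> connected_on F0 (K \<union> port_matching vert m)"
proof
  assume c: "connected_on F0 (K \<union> port_matching vert m)"
  have pi': "\<forall>l. \<pi> l \<noteq> l \<and> \<pi> (\<pi> l) = l" and m': "\<forall>l. m (m l) = l"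
    using pi m by (simp_all add: fpf_involution_on_UNIV)
  define Cl where "Cl = {y. \<exists>l\<in>{i, \<pi> i}. (y, vert l) \<in> K\<^sup>*}"
  have closed: "y \<in> Cl" if "(vert i, y) \<in> (K \<union> port_matching vert m)\<^sup>*" for y
    using that
  proof (induction rule: rtrancl_induct)
    case (step y z)
    then obtain l where l: "l \<in> {i, \<pi> i}" "(y, vert l) \<in> K\<^sup>*" unfolding Cl_def by blast
    from step.hyps(2) show ?case
    proof
      assume "(y, z) \<in> K"
      then have "(z, vert l) \<in> K\<^sup>*"
        using symK l by (meson symD converse_rtrancl_into_rtrancl)
      then show ?case using l unfolding Cl_def by blast
    next
      assume "(y, z) \<in> port_matching vert m"
      then obtain k where yk: "y = vert k" "z = vert (m k)" unfolding port_matching_def by blast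
      have "l = k \<or> l = \<pi> k" using piK l yk by blast
      then have "k = l \<or> k = \<pi> l" using pi' by metis
      then have "k \<in> {i, \<pi> i}" using l pi' by auto
      then have "m k \<in> {i, \<pi> i}" using mi m' by (metis insert_iff singletonD)
      then show ?case using yk unfolding Cl_def by blast
    qed
  qed (unfold Cl_def, blast)
  have "\<exists>l0. l0 \<noteq> i \<and> l0 \<noteq> \<pi> i"
    by (metis port.distinct(1,3,11))
  then obtain l0 where l0: "l0 \<noteq> i" "l0 \<noteq> \<pi> i" by blast
  have "vert l0 \<in> Cl" using c vert closed unfolding connected_on_def by blast
  then obtain l where l: "l \<in> {i, \<pi> i}" "(vert l0, vert l) \<in> K\<^sup>*" unfolding Cl_def by blast
  then have "l = l0 \<or> l = \<pi> l0" using piK by blast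
  then have "l0 = l \<or> l0 = \<pi> l" using pi' by metis
  then show False using l l0 pi' by auto
qed

lemma connected_on_Un_port_matching:
  assumes symK: "sym K" and pi: "fpf_involution_on UNIV \<pi>" and m: "fpf_involution_on UNIV m"
    and piK: "\<forall>l. (vert l, vert (\<pi> l)) \<in> K\<^sup>*"
    and disj: "\<forall>l. m l \<noteq> \<pi> l" and reach: "\<forall>v\<in>F0. \<exists>l. (v, vert l) \<in> K\<^sup>*"
  shows "connected_on F0 (K \<union> port_matching vert m)"
proof -
  let ?Q = "K \<union> port_matching vert m"
  have KQ: "K\<^sup>* \<subseteq> ?Q\<^sup>*" by (rule rtrancl_mono) blast
  have ports: "(vert l, vert l') \<in> ?Q\<^sup>*" for l l'
  proof -
    have "(l, l') \<in> ({(l, \<pi> l) | l. True} \<union> {(l, m l) | l. True})\<^sup>*"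
      using rtrancl_two_port_matchings_total[OF pi m disj] .
    then show ?thesis
    proof (induction rule: rtrancl_induct)
      case (step y z)
      have "(vert y, vert z) \<in> ?Q\<^sup>*"
      proof (cases "z = \<pi> y")
        case True
        then show ?thesis using piK KQ by blast
      next
        case False
        then have "z = m y" using step.hyps(2) by blast
        then have "(vert y, vert z) \<in> ?Q" unfolding port_matching_def by blast
        then show ?thesis by blast
      qed
      then show ?case using step.IH by (rule rtrancl_trans[rotated])
    qed simp
  qed
  show ?thesis unfolding connected_on_def
  proof (intro ballI)
    fix x y assume "x \<in> F0" "y \<in> F0"
    then obtain lx ly where "(x, vert lx) \<in> K\<^sup>*" "(y, vert ly) \<in> K\<^sup>*" using reach by blast
    moreover have "(y, vert ly) \<in> K\<^sup>* \<Longrightarrow> (vert ly, y) \<in> K\<^sup>*"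
      using symK by (meson sym_rtrancl symD)
    ultimately have "(x, vert lx) \<in> ?Q\<^sup>*" "(vert ly, y) \<in> ?Q\<^sup>*" using KQ by blast+
    then show "(x, y) \<in> ?Q\<^sup>*" using ports[of lx ly] by (meson rtrancl_trans)
  qed
qed

lemma connected_on_Un_port_matching_iff:
  assumes symK: "sym K" and vert: "\<forall>l. vert l \<in> F0"
    and pi: "fpf_involution_on UNIV \<pi>" and m: "fpf_involution_on UNIV m"
    and piK: "\<forall>l l'. (vert l, vert l') \<in> K\<^sup>* \<longleftrightarrow> l' = l \<or> l' = \<pi> l"
  shows "connected_on F0 (K \<union> port_matching vert m) \<longleftrightarrow>
           (\<forall>v\<in>F0. \<exists>l. (v, vert l) \<in> K\<^sup>*) \<and> (\<forall>l. m l \<noteq> \<pi> l)"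
proof
  assume c: "connected_on F0 (K \<union> port_matching vert m)"
  have "\<exists>l. (v, vert l) \<in> K\<^sup>*" if "v \<in> F0" for v
  proof (rule rtrancl_Un_port_matching_reaches_port[OF symK])
    show "(vert LP, v) \<in> (K \<union> port_matching vert m)\<^sup>*"
      using c vert that unfolding connected_on_def by blast
  qed
  moreover have "m l \<noteq> \<pi> l" for l
    using not_connected_on_Un_port_matching[OF assms, of l] c by blast
  ultimately show "(\<forall>v\<in>F0. \<exists>l. (v, vert l) \<in> K\<^sup>*) \<and> (\<forall>l. m l \<noteq> \<pi> l)" by blast
next
  assume "(\<forall>v\<in>F0. \<exists>l. (v, vert l) \<in> K\<^sup>*) \<and> (\<forall>l. m l \<noteq> \<pi> l)"
  moreover have "\<forall>l. (vert l, vert (\<pi> l)) \<in> K\<^sup>*" using piK by blast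
  ultimately show "connected_on F0 (K \<union> port_matching vert m)"
    using connected_on_Un_port_matching[OF symK pi m] by blast
qed

text \<open>The pairings of the six ports LP, LN, LA1, LA2, LB1, LB2 (the flags r1 a1, r1 b2 and
  the far ends of a1, a2, b1, b2) made by the corner: in the graph itself, after the
  exchange, and in the graph itself after deleting a and b.\<close>
fun match_keep :: "port \<Rightarrow> port" where
  "match_keep LP = LA1" | "match_keep LA1 = LP" | "match_keep LA2 = LB1"
| "match_keep LB1 = LA2" | "match_keep LB2 = LN" | "match_keep LN = LB2"

fun match_exch :: "port \<Rightarrow> port" where
  "match_exch LP = LB1" | "match_exch LB1 = LP" | "match_exch LB2 = LA1"
| "match_exch LA1 = LB2" | "match_exch LA2 = LN" | "match_exch LN = LA2"

fun match_del :: "port \<Rightarrow> port" where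
  "match_del LP = LN" | "match_del LN = LP" | "match_del LA1 = LA2"
| "match_del LA2 = LA1" | "match_del LB1 = LB2" | "match_del LB2 = LB1"

lemma fpf_involution_matches:
  "fpf_involution_on UNIV match_keep" "fpf_involution_on UNIV match_exch"
  "fpf_involution_on UNIV match_del"
  unfolding fpf_involution_on_UNIV all_port by simp_all

text \<open>match_keep and match_del together form a hexagon whose three long diagonals are
  match_exch; the equivalence is a finite check over the fifteen perfect matchings \<pi>.\<close>
lemma avoids_match_exch_iff:
  assumes pi: "fpf_involution_on UNIV \<pi>"
  shows "(\<forall>l. match_exch l \<noteq> \<pi> l) \<longleftrightarrow>
    ((\<forall>l. match_keep l \<noteq> \<pi> l) \<noteq> (\<forall>l. match_del l \<noteq> \<pi> l))"
proof -
  have p: "\<pi> LP \<noteq> LP" "\<pi> LN \<noteq> LN" "\<pi> LA1 \<noteq> LA1" "\<pi> LA2 \<noteq> LA2" "\<pi> LB1 \<noteq> LB1" "\<pi> LB2 \<noteq> LB2"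
    "\<pi> (\<pi> LP) = LP" "\<pi> (\<pi> LN) = LN" "\<pi> (\<pi> LA1) = LA1" "\<pi> (\<pi> LA2) = LA2"
    "\<pi> (\<pi> LB1) = LB1" "\<pi> (\<pi> LB2) = LB2"
    using pi by (auto simp: fpf_involution_on_UNIV)
  show ?thesis unfolding all_port[of "\<lambda>l. _ l \<noteq> \<pi> l"]
    using p by (cases "\<pi> LP"; simp_all; cases "\<pi> LN"; simp_all; cases "\<pi> LA1"; simp_all;
      cases "\<pi> LA2"; simp_all; cases "\<pi> LB1"; simp_all; cases "\<pi> LB2"; simp_all)
qed

lemma equiv_classes_card_2_involution:
  fixes P :: "('a :: finite \<times> 'a) set"
  assumes eq: "equiv UNIV P" and two: "\<forall>l. card (P `` {l}) = 2"
  obtains \<pi> where "fpf_involution_on UNIV \<pi>" "\<forall>l l'. (l, l') \<in> P \<longleftrightarrow> l' = l \<or> l' = \<pi> l"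
proof -
  have "\<exists>l'. P `` {l} = {l, l'} \<and> l' \<noteq> l" for l
  proof -
    obtain u w where uw: "P `` {l} = {u, w}" "u \<noteq> w" using two by (meson card_2_iff)
    moreover have "l \<in> P `` {l}" using equiv_class_self[OF eq] by simp
    ultimately show ?thesis by (metis insert_commute insertE singletonD)
  qed
  then obtain \<pi> where pi: "P `` {l} = {l, \<pi> l}" "\<pi> l \<noteq> l" for l by metis
  have "\<pi> (\<pi> l) = l" for l
  proof -
    have "(l, \<pi> l) \<in> P" using pi(1)[of l] by blast
    then have "P `` {\<pi> l} = P `` {l}" using equiv_class_eq[OF eq] by metis
    then show ?thesis using pi[of l] pi[of "\<pi> l"] by (metis doubleton_eq_iff)
  qed
  then show ?thesis
    using that[of \<pi>] pi unfolding fpf_involution_on_UNIV by blast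
qed

lemma ribbon_graphD:
  assumes "ribbon_graph G" "y \<in> flags G"
  shows "r0 G y \<in> flags G" "r0 G (r0 G y) = y" "r0 G y \<noteq> y"
    "r1 G y \<in> flags G" "r1 G (r1 G y) = y" "r1 G y \<noteq> y"
    "r2 G y \<in> flags G" "r2 G (r2 G y) = y" "r2 G y \<noteq> y"
    "r0 G (r2 G y) = r2 G (r0 G y)" "r0 G (r2 G y) \<noteq> y"
  using assms unfolding ribbon_graph_def fpf_involution_on_def by auto

lemma r0_r2_r0:
  assumes "ribbon_graph G" "y \<in> flags G"
  shows "r0 G (r2 G (r0 G y)) = r2 G y" "r2 G (r0 G (r2 G y)) = r0 G y"
  using ribbon_graphD[OF assms] ribbon_graphD[OF assms(1) ribbon_graphD(1)[OF assms]]
    ribbon_graphD[OF assms(1) ribbon_graphD(7)[OF assms]] by metis+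

lemma edge_of_eq:
  assumes "ribbon_graph G" "y \<in> flags G" "z \<in> edge_of G y"
  shows "edge_of G z = edge_of G y"
  using assms(3) ribbon_graphD[OF assms(1,2)] r0_r2_r0[OF assms(1,2)]
  unfolding edge_of_def by auto

lemma sub_r0_involution:
  assumes "ribbon_graph G" "y \<in> flags G"
  shows "sub_r0 G phi y \<in> flags G" "sub_r0 G phi (sub_r0 G phi y) = y" "sub_r0 G phi y \<noteq> y"
proof -
  have "edge_of G (r0 G y) = edge_of G y" "edge_of G (r2 G y) = edge_of G y"
    by (rule edge_of_eq[OF assms], simp add: edge_of_def)+
  then show "sub_r0 G phi y \<in> flags G" "sub_r0 G phi (sub_r0 G phi y) = y" "sub_r0 G phi y \<noteq> y"
    using ribbon_graphD[OF assms] unfolding sub_r0_def by auto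
qed

lemma num_boundary_components_eq_1_iff:
  assumes "flags G \<noteq> {}"
  shows "num_boundary_components G phi = 1 \<longleftrightarrow>
         connected_on (flags G) (gen_rel (flags G) [sub_r0 G phi, r1 G])"
  unfolding num_boundary_components_def num_orbits_def
  using card_quotient_rtrancl_eq_1_iff[OF assms] by blast

lemma exchange_ends_simps [simp]:
  "flags (exchange_ends G x) = flags G" "r1 (exchange_ends G x) = exchange_r1 G x"
  "edge_of (exchange_ends G x) = edge_of G" "sub_r0 (exchange_ends G x) = sub_r0 G"
  "edges (exchange_ends G x) = edges G"
  by (simp_all add: exchange_ends_def fun_eq_iff edge_of_def sub_r0_def edges_def)

locale corner =
  fixes G :: "'f rmap" and x :: 'f
  assumes ribbon: "ribbon_graph G" and x_flag: "x \<in> flags G"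
    and distinct_edges: "edge_of G x \<noteq> edge_of G (r1 G x)"
begin

abbreviation "F \<equiv> flags G"
abbreviation "a \<equiv> edge_of G x"
abbreviation "b \<equiv> edge_of G (r1 G x)"

definition "a2 = x"
definition "a1 = r2 G x"
definition "b1 = r1 G x"
definition "b2 = r2 G (r1 G x)"
definition "a1' = r0 G a1"
definition "a2' = r0 G a2"
definition "b1' = r0 G b1"
definition "b2' = r0 G b2"
definition "p = r1 G a1"
definition "n = r1 G b2"

lemmas corner_defs = a1_def a2_def b1_def b2_def a1'_def a2'_def b1'_def b2'_def p_def n_def

lemma b1_flag: "b1 \<in> F"
  using ribbon_graphD[OF ribbon x_flag] unfolding b1_def by simp

lemma corner_flags:
  "a1 \<in> F" "a2 \<in> F" "b1 \<in> F" "b2 \<in> F" "a1' \<in> F" "a2' \<in> F" "b1' \<in> F" "b2' \<in> F" "p \<in> F" "n \<in> F"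
  using ribbon_graphD[OF ribbon x_flag] ribbon_graphD[OF ribbon] x_flag unfolding corner_defs by auto

lemma edge_a: "a = {a1, a2, a1', a2'}"
  using ribbon_graphD[OF ribbon x_flag] unfolding corner_defs edge_of_def by auto

lemma edge_b: "b = {b1, b2, b1', b2'}"
  using ribbon_graphD[OF ribbon b1_flag] unfolding corner_defs edge_of_def by auto

lemma edge_of_corner:
  "edge_of G a1 = a" "edge_of G a2 = a" "edge_of G a1' = a" "edge_of G a2' = a"
  "edge_of G b1 = b" "edge_of G b2 = b" "edge_of G b1' = b" "edge_of G b2' = b"
  using edge_of_eq[OF ribbon x_flag] edge_of_eq[OF ribbon b1_flag] edge_a edge_b
  unfolding b1_def by auto

lemma corner_distinct_ab: "u \<in> a \<Longrightarrow> v \<in> b \<Longrightarrow> u \<noteq> v"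
  using edge_of_eq[OF ribbon x_flag, of u] edge_of_eq[OF ribbon b1_flag, of v] distinct_edges
  unfolding b1_def by metis

lemma r1_corner: "r1 G a1 = p" "r1 G p = a1" "r1 G a2 = b1" "r1 G b1 = a2" "r1 G b2 = n" "r1 G n = b2"
  using ribbon_graphD[OF ribbon] corner_flags unfolding corner_defs by auto

lemma corner_flags_distinct:
  "a1 \<noteq> a2" "a1 \<noteq> a1'" "a1 \<noteq> a2'" "a2 \<noteq> a1'" "a2 \<noteq> a2'" "a1' \<noteq> a2'"
  "b1 \<noteq> b2" "b1 \<noteq> b1'" "b1 \<noteq> b2'" "b2 \<noteq> b1'" "b2 \<noteq> b2'" "b1' \<noteq> b2'"
  "a1 \<noteq> b1" "a1 \<noteq> b2" "a1 \<noteq> b1'" "a1 \<noteq> b2'" "a2 \<noteq> b1" "a2 \<noteq> b2" "a2 \<noteq> b1'" "a2 \<noteq> b2'"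
  "a1' \<noteq> b1" "a1' \<noteq> b2" "a1' \<noteq> b1'" "a1' \<noteq> b2'" "a2' \<noteq> b1" "a2' \<noteq> b2" "a2' \<noteq> b1'" "a2' \<noteq> b2'"
  "p \<noteq> a1" "p \<noteq> a2" "p \<noteq> b1" "n \<noteq> a2" "n \<noteq> b1" "n \<noteq> b2"
proof -
  show "a1 \<noteq> a2" "a1 \<noteq> a1'" "a1 \<noteq> a2'" "a2 \<noteq> a1'" "a2 \<noteq> a2'" "a1' \<noteq> a2'"
    using ribbon_graphD[OF ribbon x_flag] ribbon_graphD[OF ribbon] x_flag unfolding corner_defs by metis+
  show "b1 \<noteq> b2" "b1 \<noteq> b1'" "b1 \<noteq> b2'" "b2 \<noteq> b1'" "b2 \<noteq> b2'" "b1' \<noteq> b2'"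
    using b1_flag ribbon_graphD[OF ribbon] unfolding corner_defs by metis+
  show ab: "a1 \<noteq> b1" "a1 \<noteq> b2" "a1 \<noteq> b1'" "a1 \<noteq> b2'" "a2 \<noteq> b1" "a2 \<noteq> b2" "a2 \<noteq> b1'" "a2 \<noteq> b2'"
    "a1' \<noteq> b1" "a1' \<noteq> b2" "a1' \<noteq> b1'" "a1' \<noteq> b2'" "a2' \<noteq> b1" "a2' \<noteq> b2" "a2' \<noteq> b1'" "a2' \<noteq> b2'"
    using corner_distinct_ab edge_a edge_b by blast+
  have inv: "\<And>u w. u \<in> F \<Longrightarrow> r1 G u = w \<Longrightarrow> u = r1 G w"
    and fpf: "\<And>u. u \<in> F \<Longrightarrow> r1 G u \<noteq> u" using ribbon_graphD[OF ribbon] by auto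
  show "p \<noteq> a1" "n \<noteq> b2" using fpf corner_flags r1_corner by metis+
  show "p \<noteq> a2" "p \<noteq> b1" "n \<noteq> a2" "n \<noteq> b1"
    using inv[OF corner_flags(1)] inv[OF corner_flags(4)] r1_corner ab
      \<open>a1 \<noteq> a2\<close> \<open>b1 \<noteq> b2\<close> by metis+
qed

lemmas corner_distinct = corner_flags_distinct corner_flags_distinct[symmetric]

text \<open>n = a1 means that a and b are the only ends at their vertex; then the exchange
  does not change the cyclic order.\<close>
lemma degenerate_iff: "n = a1 \<longleftrightarrow> p = b2"
  using ribbon_graphD[OF ribbon] corner_flags r1_corner by metis

lemma nondegenerate_distinct:
  assumes "n \<noteq> a1"
  shows "p \<noteq> b2" "p \<noteq> n" "b2 \<noteq> p" "n \<noteq> p" "a1 \<noteq> n"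
proof -
  have "p \<noteq> n"
  proof
    assume "p = n"
    then have "r1 G (r1 G a1) = r1 G (r1 G b2)" unfolding p_def n_def by simp
    then show False using ribbon_graphD(5)[OF ribbon] corner_flags corner_distinct by metis
  qed
  then show "p \<noteq> b2" "p \<noteq> n" "b2 \<noteq> p" "n \<noteq> p" "a1 \<noteq> n"
    using assms degenerate_iff by auto
qed

lemma sub_r0_a:
  "a \<in> phi \<Longrightarrow> sub_r0 G phi a1 = a1' \<and> sub_r0 G phi a1' = a1 \<and> sub_r0 G phi a2 = a2' \<and> sub_r0 G phi a2' = a2"
  "a \<notin> phi \<Longrightarrow> sub_r0 G phi a1 = a2 \<and> sub_r0 G phi a1' = a2' \<and> sub_r0 G phi a2 = a1 \<and> sub_r0 G phi a2' = a1'"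
  using edge_of_corner ribbon_graphD[OF ribbon] corner_flags r0_r2_r0[OF ribbon x_flag]
  unfolding sub_r0_def corner_defs by auto

lemma sub_r0_b:
  "b \<in> phi \<Longrightarrow> sub_r0 G phi b1 = b1' \<and> sub_r0 G phi b1' = b1 \<and> sub_r0 G phi b2 = b2' \<and> sub_r0 G phi b2' = b2"
  "b \<notin> phi \<Longrightarrow> sub_r0 G phi b1 = b2 \<and> sub_r0 G phi b1' = b2' \<and> sub_r0 G phi b2 = b1 \<and> sub_r0 G phi b2' = b1'"
  using edge_of_corner ribbon_graphD[OF ribbon] corner_flags r0_r2_r0[OF ribbon b1_flag]
  unfolding sub_r0_def corner_defs by auto

lemma exchange_r1_eq:
  assumes "n \<noteq> a1"
  shows "exchange_r1 G x y = (if y = p then b1 else if y = b1 then p else if y = b2 then a1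
     else if y = a1 then b2 else if y = a2 then n else if y = n then a2 else r1 G y)"
  using assms unfolding exchange_r1_def Let_def corner_defs by simp

lemma exchange_r1_degenerate: "n = a1 \<Longrightarrow> exchange_r1 G x = r1 G"
  unfolding exchange_r1_def Let_def corner_defs by simp

lemma exchange_r1_corner:
  assumes "n \<noteq> a1"
  shows "exchange_r1 G x p = b1" "exchange_r1 G x b1 = p" "exchange_r1 G x b2 = a1"
    "exchange_r1 G x a1 = b2" "exchange_r1 G x a2 = n" "exchange_r1 G x n = a2"
  by (simp_all add: assms exchange_r1_eq[OF assms] corner_distinct nondegenerate_distinct[OF assms])

lemma exchange_r1_outside:
  "y \<notin> {p, b1, b2, a1, a2, n} \<Longrightarrow> exchange_r1 G x y = r1 G y"
  by (cases "n = a1") (auto simp: exchange_r1_eq exchange_r1_degenerate)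

lemma exchange_r1_involutive: "\<forall>u\<in>F. exchange_r1 G x u \<in> F \<and> exchange_r1 G x (exchange_r1 G x u) = u"
proof (cases "n = a1")
  case False
  show ?thesis
  proof
    fix u assume u: "u \<in> F"
    show "exchange_r1 G x u \<in> F \<and> exchange_r1 G x (exchange_r1 G x u) = u"
    proof (cases "u \<in> {p, b1, b2, a1, a2, n}")
      case True
      then show ?thesis using exchange_r1_corner[OF False] corner_flags by auto
    next
      case out: False
      then have "r1 G u \<notin> {p, b1, b2, a1, a2, n}"
        using r1_corner ribbon_graphD(5)[OF ribbon u] by auto
      then show ?thesis using out exchange_r1_outside ribbon_graphD[OF ribbon u] by simp
    qed
  qed
qed (simp add: exchange_r1_degenerate ribbon_graphD[OF ribbon])

lemma sub_r0_involutive: "\<forall>u\<in>F. sub_r0 G phi u \<in> F \<and> sub_r0 G phi (sub_r0 G phi u) = u"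
  using sub_r0_involution[OF ribbon] by blast

lemma r1_involutive: "\<forall>u\<in>F. r1 G u \<in> F \<and> r1 G (r1 G u) = u"
  using ribbon_graphD[OF ribbon] by blast

end

context corner
begin

text \<open>Seen from the flag r1 x the roles of a and b are swapped, and the exchange is the same.\<close>
lemma corner_r1: "corner G (r1 G x)"
  using ribbon b1_flag distinct_edges ribbon_graphD(5)[OF ribbon x_flag]
  by unfold_locales (simp_all add: b1_def)

lemma corner_r1_flags:
  "corner.a1 G (r1 G x) = b2" "corner.a2 (r1 G x) = b1"
  "corner.b1 G (r1 G x) = a2" "corner.b2 G (r1 G x) = a1"
  "corner.p G (r1 G x) = n" "corner.n G (r1 G x) = p"
proof -
  interpret swap: corner G "r1 G x" by (rule corner_r1)
  show "corner.a1 G (r1 G x) = b2" "corner.a2 (r1 G x) = b1"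
    "corner.b1 G (r1 G x) = a2" "corner.b2 G (r1 G x) = a1"
    "corner.p G (r1 G x) = n" "corner.n G (r1 G x) = p"
    using ribbon_graphD(5)[OF ribbon x_flag] unfolding swap.corner_defs corner_defs by simp_all
qed

lemma exchange_r1_r1: "exchange_r1 G (r1 G x) = exchange_r1 G x"
proof (cases "n = a1")
  case True
  then show ?thesis
    using corner.exchange_r1_degenerate[OF corner_r1] exchange_r1_degenerate degenerate_iff
    by (simp add: corner_r1_flags)
next
  case False
  then have "p \<noteq> b2" using degenerate_iff by simp
  then show ?thesis
    using corner.exchange_r1_eq[OF corner_r1] exchange_r1_eq[OF False]
      corner_distinct nondegenerate_distinct[OF False]
    by (auto simp: corner_r1_flags fun_eq_iff)
qed

end

context corner
begin

lemma sym_gen_rel_restrict: "sym (gen_rel F [sub_r0 G phi, h] \<inter> F0 \<times> F0)"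
  if "\<forall>u\<in>F. h u \<in> F \<and> h (h u) = u"
  using sym_gen_rel_two[OF sub_r0_involutive that] by (auto simp: sym_def)

text \<open>If a is not in phi, the boundary runs a1 - a2 across the vertex disc, so in both
  graphs a1 and a2 merely link p with b1 and b2 with n.\<close>
lemma connected_on_a_out_iff:
  assumes aphi: "a \<notin> phi" and nd: "n \<noteq> a1"
    and h: "h = r1 G \<or> h = exchange_r1 G x"
  defines "F0 \<equiv> F - {a1, a2}"
  shows "connected_on F (gen_rel F [sub_r0 G phi, h]) \<longleftrightarrow>
    connected_on F0 (gen_rel F [sub_r0 G phi, r1 G] \<inter> F0 \<times> F0 \<union> {(p, b1), (b1, p)})"
    (is "_ \<longleftrightarrow> connected_on F0 ?Q")
proof -
  let ?S = "sub_r0 G phi" and ?t = "exchange_r1 G x"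
  let ?K = "gen_rel F [?S, r1 G] \<inter> F0 \<times> F0"
  have S: "?S a1 = a2" "?S a2 = a1" using sub_r0_a(2)[OF aphi] by auto
  note t = exchange_r1_corner[OF nd]
  have d: "p \<noteq> a1" "p \<noteq> a2" "b1 \<noteq> a1" "b1 \<noteq> a2" "b2 \<noteq> a1" "b2 \<noteq> a2" "n \<noteq> a1" "n \<noteq> a2"
    using corner_distinct nd by auto
  have F0: "F0 \<subseteq> F" "p \<in> F0" "b1 \<in> F0" "b2 \<in> F0" "n \<in> F0" "F - F0 = {a1, a2}"
    using d corner_flags unfolding F0_def by auto
  have symQ: "sym ?Q"
    using sym_gen_rel_restrict[OF r1_involutive] by (auto simp: sym_def)
  have invh: "\<forall>u\<in>F. h u \<in> F \<and> h (h u) = u"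
    using h r1_involutive exchange_r1_involutive by auto
  from h show ?thesis
  proof
    assume h: "h = r1 G"
    let ?R = "gen_rel F [?S, r1 G]"
    have e: "(p, a1) \<in> ?R" "(a1, a2) \<in> ?R" "(a2, b1) \<in> ?R" "(b1, a2) \<in> ?R" "(a2, a1) \<in> ?R" "(a1, p) \<in> ?R"
      unfolding gen_rel_two_iff using corner_flags r1_corner S by auto
    have pb1: "(p, b1) \<in> ?R\<^sup>*" "(b1, p) \<in> ?R\<^sup>*"
      using e by (meson converse_rtrancl_into_rtrancl r_into_rtrancl)+
    have "?K \<subseteq> ?R" by blast
    then have QR: "?Q \<subseteq> ?R\<^sup>*" using pb1 by blast
    show ?thesis unfolding h
    proof (rule connected_on_gen_rel_iff_retract[OF sub_r0_involutive r1_involutive F0(1) _ _ symQ _ _ QR,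
          where f = "\<lambda>y. if y = a1 then p else if y = a2 then b1 else y"])
      show "\<forall>y\<in>F - F0. (y, if y = a1 then p else if y = a2 then b1 else y) \<in> ?R\<^sup>*"
        using e(6) e(3) d F0(6) by auto
      show "\<forall>u\<in>F - F0. \<forall>v\<in>{?S u, r1 G u}.
          (if u = a1 then p else if u = a2 then b1 else u) = (if v = a1 then p else if v = a2 then b1 else v)
          \<or> ((if u = a1 then p else if u = a2 then b1 else u), (if v = a1 then p else if v = a2 then b1 else v)) \<in> ?Q"
        using F0(6) S r1_corner d by auto
    qed (use F0 d in \<open>auto simp: gen_rel_two_iff\<close>)
  next
    assume h: "h = ?t"
    let ?R = "gen_rel F [?S, ?t]"
    have e: "(b2, a1) \<in> ?R" "(a1, a2) \<in> ?R" "(a2, n) \<in> ?R" "(n, a2) \<in> ?R" "(a2, a1) \<in> ?R"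
      "(a1, b2) \<in> ?R" "(p, b1) \<in> ?R" "(b1, p) \<in> ?R"
      unfolding gen_rel_two_iff using corner_flags t S by auto
    have K: "?K \<subseteq> ?R\<^sup>*"
    proof clarify
      fix u v assume uv: "(u, v) \<in> gen_rel F [?S, r1 G]" "u \<in> F0" "v \<in> F0"
      show "(u, v) \<in> ?R\<^sup>*"
      proof (cases "v = ?S u \<or> u \<notin> {p, b1, b2, n}")
        case True
        then have "(u, v) \<in> ?R"
          using uv exchange_r1_outside unfolding gen_rel_two_iff F0_def by auto
        then show ?thesis by blast
      next
        case False
        then have "(u, v) \<in> {(b2, n), (n, b2)}"
          using uv r1_corner unfolding gen_rel_two_iff F0_def by auto
        moreover have "(b2, n) \<in> ?R\<^sup>*" "(n, b2) \<in> ?R\<^sup>*"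
          using e by (meson converse_rtrancl_into_rtrancl r_into_rtrancl)+
        ultimately show ?thesis by blast
      qed
    qed
    have QR: "?Q \<subseteq> ?R\<^sup>*" using K e(7,8) by blast
    show ?thesis unfolding h
    proof (rule connected_on_gen_rel_iff_retract[OF sub_r0_involutive exchange_r1_involutive F0(1)
          _ _ symQ _ _ QR, where f = "\<lambda>y. if y = a1 then b2 else if y = a2 then n else y"])
      show "\<forall>u\<in>F0. \<forall>v\<in>{?S u, ?t u}. v \<in> F0 \<longrightarrow> (u, v) \<in> ?Q"
      proof (intro ballI impI)
        fix u v assume uv: "u \<in> F0" "v \<in> {?S u, ?t u}" "v \<in> F0"
        show "(u, v) \<in> ?Q"
        proof (cases "v = ?S u \<or> u \<notin> {p, b1, b2, n}")
          case True
          then have "v = ?S u \<or> v = r1 G u"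
            using uv exchange_r1_outside F0 by (auto simp: F0_def)
          then show ?thesis using uv F0 by (auto simp: gen_rel_two_iff)
        next
          case False
          then show ?thesis using uv t F0 by auto
        qed
      qed
      have K2: "(b2, n) \<in> ?Q" "(n, b2) \<in> ?Q"
        using F0 r1_corner corner_flags by (auto simp: gen_rel_two_iff)
      show "\<forall>u\<in>F - F0. \<forall>v\<in>{?S u, ?t u}.
          (if u = a1 then b2 else if u = a2 then n else u) = (if v = a1 then b2 else if v = a2 then n else v)
          \<or> ((if u = a1 then b2 else if u = a2 then n else u), (if v = a1 then b2 else if v = a2 then n else v)) \<in> ?Q"
        using F0(6) S t d K2 by auto
      show "\<forall>y\<in>F - F0. (y, if y = a1 then b2 else if y = a2 then n else y) \<in> ?R\<^sup>*"
        using e(3) e(6) d F0(6) by auto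
    qed (use F0 d in \<open>auto simp: gen_rel_two_iff\<close>)
  qed
qed

end

context corner
begin

definition port_flag :: "port \<Rightarrow> 'f" where
  "port_flag l = (case l of LP \<Rightarrow> p | LN \<Rightarrow> n | LA1 \<Rightarrow> a1' | LA2 \<Rightarrow> a2' | LB1 \<Rightarrow> b1' | LB2 \<Rightarrow> b2')"

definition "F0 = F - {a1, a2, b1, b2}"

abbreviation "K phi \<equiv> gen_rel F [sub_r0 G phi, r1 G] \<inter> F0 \<times> F0"

lemma port_matching_matches:
  "port_matching port_flag match_keep = {(p, a1'), (a1', p), (a2', b1'), (b1', a2'), (b2', n), (n, b2')}"
  "port_matching port_flag match_exch = {(p, b1'), (b1', p), (b2', a1'), (a1', b2'), (a2', n), (n, a2')}"
  "port_matching port_flag match_del = {(p, n), (n, p), (a1', a2'), (a2', a1'), (b1', b2'), (b2', b1')}"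
  unfolding port_matching_def port_flag_def UNIV_port by auto

lemma port_flag_F0: "n \<noteq> a1 \<Longrightarrow> port_flag l \<in> F0"
  using corner_flags corner_distinct nondegenerate_distinct unfolding F0_def port_flag_def
  by (cases l) auto

lemma F0_facts:
  assumes "n \<noteq> a1"
  shows "F0 \<subseteq> F" "F - F0 = {a1, a2, b1, b2}"
    "p \<in> F0" "n \<in> F0" "a1' \<in> F0" "a2' \<in> F0" "b1' \<in> F0" "b2' \<in> F0"
  using port_flag_F0[OF assms, of LP] port_flag_F0[OF assms, of LN] port_flag_F0[OF assms, of LA1]
    port_flag_F0[OF assms, of LA2] port_flag_F0[OF assms, of LB1] port_flag_F0[OF assms, of LB2]
    corner_flags
  unfolding F0_def port_flag_def by auto

lemma sym_K_Un_port_matching: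
  "sym (K phi \<union> port_matching port_flag m)" if "fpf_involution_on UNIV m"
  using sym_gen_rel_restrict[OF r1_involutive, of phi F0] sym_port_matching[OF that]
  by (rule sym_Un)

lemma sub_r0_ab_in:
  assumes "a \<in> phi" "b \<in> phi"
  shows "sub_r0 G phi a1 = a1'" "sub_r0 G phi a1' = a1" "sub_r0 G phi a2 = a2'" "sub_r0 G phi a2' = a2"
    "sub_r0 G phi b1 = b1'" "sub_r0 G phi b1' = b1" "sub_r0 G phi b2 = b2'" "sub_r0 G phi b2' = b2"
  using sub_r0_a(1)[OF assms(1)] sub_r0_b(1)[OF assms(2)] by auto

lemma connected_on_keep_iff:
  assumes ab: "a \<in> phi" "b \<in> phi" and nd: "n \<noteq> a1"
  shows "connected_on F (gen_rel F [sub_r0 G phi, r1 G]) \<longleftrightarrow>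
    connected_on F0 (K phi \<union> port_matching port_flag match_keep)"
proof -
  let ?S = "sub_r0 G phi" and ?R = "gen_rel F [sub_r0 G phi, r1 G]"
  let ?Q = "K phi \<union> port_matching port_flag match_keep"
  define f where "f y = (if y = a1 then p else if y = a2 then a2' else if y = b1 then b1'
    else if y = b2 then n else y)" for y
  note S = sub_r0_ab_in[OF ab] and F0 = F0_facts[OF nd]
  have f: "f a1 = p" "f a2 = a2'" "f b1 = b1'" "f b2 = n" and f_id: "\<forall>y\<in>F0. f y = y"
    unfolding f_def F0_def using corner_distinct by auto
  have f_in: "\<forall>y\<in>F. f y \<in> F0"
  proof
    fix y assume "y \<in> F"
    then have "y \<in> F0 \<or> y \<in> {a1, a2, b1, b2}" using F0(2) by blast
    then show "f y \<in> F0" using F0 f f_id by auto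
  qed
  have e: "(a1, p) \<in> ?R" "(p, a1) \<in> ?R" "(a1, a1') \<in> ?R" "(a2', a2) \<in> ?R" "(a2, b1) \<in> ?R" "(b1, b1') \<in> ?R"
    "(b2', b2) \<in> ?R" "(b2, n) \<in> ?R" "(a2, a2') \<in> ?R"
    unfolding gen_rel_two_iff using corner_flags r1_corner S by auto
  have symR: "(u, v) \<in> ?R\<^sup>* \<Longrightarrow> (v, u) \<in> ?R\<^sup>*" for u v
    using sym_gen_rel_two[OF sub_r0_involutive r1_involutive] by (meson sym_rtrancl symD)
  have "(p, a1') \<in> ?R\<^sup>*" "(a2', b1') \<in> ?R\<^sup>*" "(b2', n) \<in> ?R\<^sup>*"
    using e(2,3) e(4-6) e(7,8) by (meson r_into_rtrancl rtrancl_into_rtrancl)+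
  then have QR: "?Q \<subseteq> ?R\<^sup>*"
    unfolding port_matching_matches using symR by blast
  show ?thesis
  proof (rule connected_on_gen_rel_iff_retract[OF sub_r0_involutive r1_involutive F0(1) f_in f_id
        sym_K_Un_port_matching[OF fpf_involution_matches(1)] _ _ QR])
    have "f p = p" "f n = n" "f a1' = a1'" "f a2' = a2'" "f b1' = b1'" "f b2' = b2'"
      using f_id F0 by auto
    then show "\<forall>u\<in>F - F0. \<forall>v\<in>{?S u, r1 G u}. f u = f v \<or> (f u, f v) \<in> ?Q"
      unfolding F0(2) port_matching_matches using S r1_corner f by simp
    show "\<forall>y\<in>F - F0. (y, f y) \<in> ?R\<^sup>*"
      unfolding F0(2) using e f by auto
  qed (use F0(1) in \<open>auto simp: gen_rel_two_iff\<close>)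
qed

lemma connected_on_exch_iff:
  assumes ab: "a \<in> phi" "b \<in> phi" and nd: "n \<noteq> a1"
  shows "connected_on F (gen_rel F [sub_r0 G phi, exchange_r1 G x]) \<longleftrightarrow>
    connected_on F0 (K phi \<union> port_matching port_flag match_exch)"
proof -
  let ?S = "sub_r0 G phi" and ?t = "exchange_r1 G x"
  let ?R = "gen_rel F [?S, ?t]" and ?Q = "K phi \<union> port_matching port_flag match_exch"
  define f where "f y = (if y = b1 then p else if y = b2 then b2' else if y = a1 then a1'
    else if y = a2 then n else y)" for y
  note S = sub_r0_ab_in[OF ab] and F0 = F0_facts[OF nd] and t = exchange_r1_corner[OF nd]
  have f: "f a1 = a1'" "f a2 = n" "f b1 = p" "f b2 = b2'" and f_id: "\<forall>y\<in>F0. f y = y"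
    unfolding f_def F0_def using corner_distinct by auto
  have f_in: "\<forall>y\<in>F. f y \<in> F0"
  proof
    fix y assume "y \<in> F"
    then have "y \<in> F0 \<or> y \<in> {a1, a2, b1, b2}" using F0(2) by blast
    then show "f y \<in> F0" using F0 f f_id by auto
  qed
  have e: "(b1, p) \<in> ?R" "(p, b1) \<in> ?R" "(b1, b1') \<in> ?R" "(b2', b2) \<in> ?R" "(b2, a1) \<in> ?R"
    "(a1, a1') \<in> ?R" "(a2', a2) \<in> ?R" "(a2, n) \<in> ?R" "(b2, b2') \<in> ?R"
    unfolding gen_rel_two_iff using corner_flags t S by auto
  have symR: "(u, v) \<in> ?R\<^sup>* \<Longrightarrow> (v, u) \<in> ?R\<^sup>*" for u v
    using sym_gen_rel_two[OF sub_r0_involutive exchange_r1_involutive] by (meson sym_rtrancl symD)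
  have "(p, b1') \<in> ?R\<^sup>*" "(b2', a1') \<in> ?R\<^sup>*" "(a2', n) \<in> ?R\<^sup>*"
    using e(2,3) e(4-6) e(7,8) by (meson r_into_rtrancl rtrancl_into_rtrancl)+
  moreover have "K phi \<subseteq> ?R"
  proof clarify
    fix u v assume uv: "(u, v) \<in> gen_rel F [?S, r1 G]" "u \<in> F0" "v \<in> F0"
    have "u \<notin> {p, b1, b2, a1, a2, n} \<or> v = ?S u"
      using uv r1_corner F0 unfolding gen_rel_two_iff F0_def by auto
    then show "(u, v) \<in> ?R"
      using uv exchange_r1_outside unfolding gen_rel_two_iff by auto
  qed
  ultimately have QR: "?Q \<subseteq> ?R\<^sup>*"
    unfolding port_matching_matches using symR by blast
  show ?thesis
  proof (rule connected_on_gen_rel_iff_retract[OF sub_r0_involutive exchange_r1_involutive F0(1)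
        f_in f_id sym_K_Un_port_matching[OF fpf_involution_matches(2)] _ _ QR])
    show "\<forall>u\<in>F0. \<forall>v\<in>{?S u, ?t u}. v \<in> F0 \<longrightarrow> (u, v) \<in> ?Q"
    proof (intro ballI impI)
      fix u v assume uv: "u \<in> F0" "v \<in> {?S u, ?t u}" "v \<in> F0"
      have "v = ?S u \<or> v = r1 G u"
        using uv t exchange_r1_outside F0 unfolding F0_def by (cases "u \<in> {p, n}") auto
      then show "(u, v) \<in> ?Q" using uv F0(1) by (auto simp: gen_rel_two_iff)
    qed
    have "f p = p" "f n = n" "f a1' = a1'" "f a2' = a2'" "f b1' = b1'" "f b2' = b2'"
      using f_id F0 by auto
    then show "\<forall>u\<in>F - F0. \<forall>v\<in>{?S u, ?t u}. f u = f v \<or> (f u, f v) \<in> ?Q"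
      unfolding F0(2) port_matching_matches using S t f by simp
    show "\<forall>y\<in>F - F0. (y, f y) \<in> ?R\<^sup>*"
      unfolding F0(2) using e f by auto
  qed
qed

lemma sub_r0_minus_ab:
  "sub_r0 G (phi - {a, b}) a1 = a2" "sub_r0 G (phi - {a, b}) a2 = a1"
  "sub_r0 G (phi - {a, b}) b1 = b2" "sub_r0 G (phi - {a, b}) b2 = b1"
  "sub_r0 G (phi - {a, b}) a1' = a2'" "sub_r0 G (phi - {a, b}) a2' = a1'"
  "sub_r0 G (phi - {a, b}) b1' = b2'" "sub_r0 G (phi - {a, b}) b2' = b1'"
  using sub_r0_a(2)[of "phi - {a, b}"] sub_r0_b(2)[of "phi - {a, b}"] by auto

lemma sub_r0_minus_ab_outside:
  "y \<notin> a \<union> b \<Longrightarrow> sub_r0 G (phi - {a, b}) y = sub_r0 G phi y"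
  unfolding sub_r0_def edge_of_def by auto

lemma connected_on_del_iff:
  assumes ab: "a \<in> phi" "b \<in> phi" and nd: "n \<noteq> a1"
  shows "connected_on F (gen_rel F [sub_r0 G (phi - {a, b}), r1 G]) \<longleftrightarrow>
    connected_on F0 (K phi \<union> port_matching port_flag match_del)"
proof -
  let ?S = "sub_r0 G phi" and ?S' = "sub_r0 G (phi - {a, b})"
  let ?R = "gen_rel F [?S', r1 G]" and ?Q = "K phi \<union> port_matching port_flag match_del"
  define f where "f y = (if y \<in> {a1, a2, b1} then p else if y = b2 then n else y)" for y
  note S = sub_r0_ab_in[OF ab] and S' = sub_r0_minus_ab and F0 = F0_facts[OF nd]
  have f: "f a1 = p" "f a2 = p" "f b1 = p" "f b2 = n" and f_id: "\<forall>y\<in>F0. f y = y"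
    unfolding f_def F0_def using corner_distinct by auto
  have f_in: "\<forall>y\<in>F. f y \<in> F0"
  proof
    fix y assume "y \<in> F"
    then have "y \<in> F0 \<or> y \<in> {a1, a2, b1, b2}" using F0(2) by blast
    then show "f y \<in> F0" using F0 f f_id by auto
  qed
  have e: "(p, a1) \<in> ?R" "(a1, a2) \<in> ?R" "(a2, b1) \<in> ?R" "(b1, b2) \<in> ?R" "(b2, n) \<in> ?R"
    "(a1', a2') \<in> ?R" "(b1', b2') \<in> ?R" "(a1, p) \<in> ?R" "(a2, a1) \<in> ?R" "(b1, a2) \<in> ?R"
    unfolding gen_rel_two_iff using corner_flags r1_corner S' by auto
  have symR: "(u, v) \<in> ?R\<^sup>* \<Longrightarrow> (v, u) \<in> ?R\<^sup>*" for u v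
    using sym_gen_rel_two[OF sub_r0_involutive r1_involutive] by (meson sym_rtrancl symD)
  have "(p, b2) \<in> ?R\<^sup>*"
    using e(1-4) by (meson r_into_rtrancl rtrancl_into_rtrancl)
  then have "(p, n) \<in> ?R\<^sup>*" using e(5) by (rule rtrancl_into_rtrancl)
  moreover have "K phi \<subseteq> ?R"
  proof clarify
    fix u v assume uv: "(u, v) \<in> gen_rel F [?S, r1 G]" "u \<in> F0" "v \<in> F0"
    have "v = ?S u \<Longrightarrow> u \<notin> a \<union> b"
      using uv S F0 unfolding edge_a edge_b F0_def by auto
    then show "(u, v) \<in> ?R"
      using uv sub_r0_minus_ab_outside unfolding gen_rel_two_iff by auto
  qed
  ultimately have QR: "?Q \<subseteq> ?R\<^sup>*"
    unfolding port_matching_matches using symR e(6,7) by blast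
  show ?thesis
  proof (rule connected_on_gen_rel_iff_retract[OF sub_r0_involutive r1_involutive F0(1)
        f_in f_id sym_K_Un_port_matching[OF fpf_involution_matches(3)] _ _ QR])
    show "\<forall>u\<in>F0. \<forall>v\<in>{?S' u, r1 G u}. v \<in> F0 \<longrightarrow> (u, v) \<in> ?Q"
    proof (intro ballI impI)
      fix u v assume uv: "u \<in> F0" "v \<in> {?S' u, r1 G u}" "v \<in> F0"
      show "(u, v) \<in> ?Q"
      proof (cases "u \<in> a \<union> b \<and> v = ?S' u")
        case True
        then have "v = ?S' u" "u \<in> {a1', a2', b1', b2'}"
          using uv(1) unfolding edge_a edge_b F0_def by auto
        then show ?thesis unfolding port_matching_matches by (elim insertE emptyE) (simp_all add: S')
      next
        case False
        have "v = ?S u \<or> v = r1 G u"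
        proof (cases "v = ?S' u")
          case True
          then have "u \<notin> a \<union> b" using False by blast
          then show ?thesis using True sub_r0_minus_ab_outside by simp
        qed (use uv(2) in blast)
        then show ?thesis using uv(1,3) F0(1) by (auto simp: gen_rel_two_iff)
      qed
    qed
    have "f p = p" "f n = n" "f a1' = a1'" "f a2' = a2'" "f b1' = b1'" "f b2' = b2'"
      using f_id F0 by auto
    then show "\<forall>u\<in>F - F0. \<forall>v\<in>{?S' u, r1 G u}. f u = f v \<or> (f u, f v) \<in> ?Q"
      unfolding F0(2) port_matching_matches using S' r1_corner f by simp
    have "(a2, p) \<in> ?R\<^sup>*" "(b1, p) \<in> ?R\<^sup>*"
      using e(8-10) by (meson r_into_rtrancl rtrancl_into_rtrancl)+
    then show "\<forall>y\<in>F - F0. (y, f y) \<in> ?R\<^sup>*"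
      unfolding F0(2) using e f by auto
  qed
qed

end

context corner
begin

lemma finite_flags: "finite F"
  using ribbon unfolding ribbon_graph_def by blast

lemma card_ports_eq:
  assumes nd: "n \<noteq> a1"
  shows "card {l. port_flag l \<in> C} = card (C \<inter> {p, n}) + card (C \<inter> {a1', a2', b1', b2'})"
proof -
  let ?T1 = "{l \<in> {LP, LN}. port_flag l \<in> C}" and ?T2 = "{l \<in> {LA1, LA2, LB1, LB2}. port_flag l \<in> C}"
  have i: "inj_on port_flag {LP, LN}" "inj_on port_flag {LA1, LA2, LB1, LB2}"
    using nondegenerate_distinct[OF nd] corner_distinct unfolding inj_on_def port_flag_def by auto
  have img: "port_flag ` {l \<in> X. port_flag l \<in> C} = port_flag ` X \<inter> C" for X by auto
  have "{l. port_flag l \<in> C} = ?T1 \<union> ?T2" using UNIV_port by blast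
  moreover have "card (?T1 \<union> ?T2) = card ?T1 + card ?T2"
    by (rule card_Un_disjoint) auto
  ultimately have "card {l. port_flag l \<in> C} = card ?T1 + card ?T2" by simp
  also have "card ?T1 = card (port_flag ` ?T1)"
    by (rule card_image[symmetric], rule inj_on_subset[OF i(1)]) blast
  also have "port_flag ` ?T1 = C \<inter> {p, n}" unfolding img by (auto simp: port_flag_def)
  also have "card ?T2 = card (port_flag ` ?T2)"
    by (rule card_image[symmetric], rule inj_on_subset[OF i(2)]) blast
  also have "port_flag ` ?T2 = C \<inter> {a1', a2', b1', b2'}" unfolding img by (auto simp: port_flag_def)
  finally show ?thesis .
qed

lemma card_ports_in_component:
  assumes ab: "a \<in> phi" "b \<in> phi" and nd: "n \<noteq> a1" and v: "v \<in> F0"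
  defines "C \<equiv> {y \<in> F0. (v, y) \<in> (K phi)\<^sup>*}"
  shows "card {l. port_flag l \<in> C} \<le> 2" "even (card {l. port_flag l \<in> C})"
proof -
  let ?S = "sub_r0 G phi"
  note S = sub_r0_ab_in[OF ab] and F0 = F0_facts[OF nd]
  have invS: "fpf_involution_on F ?S"
    using sub_r0_involution[OF ribbon] unfolding fpf_involution_on_def by blast
  have invr: "fpf_involution_on F (r1 G)"
    using ribbon unfolding ribbon_graph_def by blast
  have finF0: "finite F0" using F0(1) finite_flags by (rule finite_subset)
  note bound = component_restrict_card_bound[OF invS invr finF0 F0(1) v, folded C_def]
  have CF0: "C \<subseteq> F0" unfolding C_def by auto
  have "?S y \<notin> F0 \<longleftrightarrow> y \<in> {a1', a2', b1', b2'}" if "y \<in> F0" for y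
  proof
    assume "?S y \<notin> F0"
    then have "?S y \<in> {a1, a2, b1, b2}" using that F0 sub_r0_involution(1)[OF ribbon] by blast
    then show "y \<in> {a1', a2', b1', b2'}"
      using sub_r0_involution(2)[OF ribbon, of y phi] that F0(1) S by auto
  qed (use S F0 in \<open>auto simp: F0_def\<close>)
  then have Cs: "card {y \<in> C. ?S y \<in> F0} + card (C \<inter> {a1', a2', b1', b2'}) = card C"
    using CF0 finF0 by (subst card_Un_disjoint[symmetric]) (auto intro: finite_subset arg_cong[where f = card])
  have "r1 G y \<notin> F0 \<longleftrightarrow> y \<in> {p, n}" if "y \<in> F0" for y
  proof
    assume "r1 G y \<notin> F0"
    then have "r1 G y \<in> {a1, a2, b1, b2}" using that F0 ribbon_graphD(4)[OF ribbon] by blast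
    then have "y \<in> {p, b1, a2, n}"
      using ribbon_graphD(5)[OF ribbon, of y] that F0(1) r1_corner by auto
    then show "y \<in> {p, n}" using that unfolding F0_def by auto
  qed (use r1_corner in \<open>auto simp: F0_def\<close>)
  then have Ct: "card {y \<in> C. r1 G y \<in> F0} + card (C \<inter> {p, n}) = card C"
    using CF0 finF0 by (subst card_Un_disjoint[symmetric]) (auto intro: finite_subset arg_cong[where f = card])
  show "card {l. port_flag l \<in> C} \<le> 2" "even (card {l. port_flag l \<in> C})"
    unfolding card_ports_eq[OF nd] using bound Cs Ct by presburger+
qed

lemma port_pairing_exists:
  assumes ab: "a \<in> phi" "b \<in> phi" and nd: "n \<noteq> a1"
  obtains \<pi> where "fpf_involution_on UNIV \<pi>"
    "\<forall>l l'. (port_flag l, port_flag l') \<in> (K phi)\<^sup>* \<longleftrightarrow> l' = l \<or> l' = \<pi> l"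
proof -
  define P where "P = {(l, l'). (port_flag l, port_flag l') \<in> (K phi)\<^sup>*}"
  have symK: "sym ((K phi)\<^sup>*)" by (rule sym_rtrancl[OF sym_gen_rel_restrict[OF r1_involutive]])
  have eqP: "equiv UNIV P"
  proof (rule equivI)
    show "P \<subseteq> UNIV \<times> UNIV" by simp
    show "refl_on UNIV P" unfolding refl_on_def P_def by auto
    show "sym P" unfolding P_def using symD[OF symK] by (intro symI) blast
    show "trans P" unfolding P_def using rtrancl_trans[of _ _ "K phi"] by (intro transI) blast
  qed
  have two: "\<forall>l. card (P `` {l}) = 2"
  proof
    fix l
    have "P `` {l} = {l'. port_flag l' \<in> {y \<in> F0. (port_flag l, y) \<in> (K phi)\<^sup>*}}"
      unfolding P_def using port_flag_F0[OF nd] by auto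
    then have "card (P `` {l}) \<le> 2" "even (card (P `` {l}))"
      using card_ports_in_component[OF ab nd port_flag_F0[OF nd, of l]] by simp_all
    moreover have "l \<in> P `` {l}" unfolding P_def by simp
    then have "card (P `` {l}) \<noteq> 0" by auto
    ultimately show "card (P `` {l}) = 2" by presburger
  qed
  obtain \<pi> where pi: "fpf_involution_on UNIV \<pi>" "\<forall>l l'. (l, l') \<in> P \<longleftrightarrow> l' = l \<or> l' = \<pi> l"
    using equiv_classes_card_2_involution[OF eqP two] by blast
  show ?thesis by (rule that[OF pi(1)]) (use pi(2) in \<open>simp add: P_def\<close>)
qed

end

context corner
begin

lemma connected_on_exchange_both_in_iff:
  assumes ab: "a \<in> phi" "b \<in> phi" and nd: "n \<noteq> a1"
  shows "connected_on F (gen_rel F [sub_r0 G phi, exchange_r1 G x]) \<longleftrightarrow>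
    connected_on F (gen_rel F [sub_r0 G phi, r1 G]) \<noteq>
    connected_on F (gen_rel F [sub_r0 G (phi - {a, b}), r1 G])"
proof -
  obtain \<pi> where pi: "fpf_involution_on UNIV \<pi>"
    and piK: "\<forall>l l'. (port_flag l, port_flag l') \<in> (K phi)\<^sup>* \<longleftrightarrow> l' = l \<or> l' = \<pi> l"
    using port_pairing_exists[OF ab nd] by blast
  have "connected_on F0 (K phi \<union> port_matching port_flag m) \<longleftrightarrow>
      (\<forall>v\<in>F0. \<exists>l. (v, port_flag l) \<in> (K phi)\<^sup>*) \<and> (\<forall>l. m l \<noteq> \<pi> l)"
    if "fpf_involution_on UNIV m" for m
    using connected_on_Un_port_matching_iff[OF sym_gen_rel_restrict[OF r1_involutive] _ pi that piK]
      port_flag_F0[OF nd] by blast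
  then show ?thesis
    using connected_on_keep_iff[OF ab nd] connected_on_exch_iff[OF ab nd] connected_on_del_iff[OF ab nd]
      fpf_involution_matches avoids_match_exch_iff[OF pi] by blast
qed

text \<open>If a and b are the only ends at their vertex, deleting both isolates the flags
  a1, a2, b1, b2 of that vertex.\<close>
lemma not_connected_on_degenerate:
  assumes "n = a1"
  shows "\<not> connected_on F (gen_rel F [sub_r0 G (phi - {a, b}), r1 G])"
proof
  let ?S' = "sub_r0 G (phi - {a, b})"
  let ?R = "gen_rel F [?S', r1 G]"
  assume c: "connected_on F ?R"
  have closed: "y \<in> {a1, a2, b1, b2}" if "(a1, y) \<in> ?R\<^sup>*" for y
    using that
  proof (induction rule: rtrancl_induct)
    case (step u w)
    then have "w = ?S' u \<or> w = r1 G u" by (simp add: gen_rel_two_iff)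
    then show ?case
      using step.IH sub_r0_minus_ab r1_corner assms degenerate_iff by auto
  qed simp
  have "(a1, a1') \<in> ?R\<^sup>*" using c corner_flags unfolding connected_on_def by blast
  then show False using closed corner_distinct by blast
qed

lemma connected_on_exchange_one_out_iff:
  assumes "a \<notin> phi \<or> b \<notin> phi"
  shows "connected_on F (gen_rel F [sub_r0 G phi, exchange_r1 G x]) \<longleftrightarrow>
    connected_on F (gen_rel F [sub_r0 G phi, r1 G])"
proof (cases "n = a1")
  case True
  then show ?thesis by (simp add: exchange_r1_degenerate)
next
  case nd: False
  show ?thesis
  proof (cases "a \<in> phi")
    case False
    then show ?thesis
      using connected_on_a_out_iff[OF False nd, of "r1 G"] connected_on_a_out_iff[OF False nd, of "exchange_r1 G x"]
      by simp
  next
    case True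
    interpret swap: corner G "r1 G x" by (rule corner_r1)
    have "edge_of G (r1 G x) \<notin> phi" "corner.n G (r1 G x) \<noteq> corner.a1 G (r1 G x)"
      using assms True nd degenerate_iff by (simp_all add: corner_r1_flags)
    then show ?thesis
      using swap.connected_on_a_out_iff[of phi "r1 G"] swap.connected_on_a_out_iff[of phi "exchange_r1 G (r1 G x)"]
      by (simp add: exchange_r1_r1)
  qed
qed

lemma num_boundary_components_exchange_ends:
  "num_boundary_components (exchange_ends G x) phi = 1 \<longleftrightarrow>
    (num_boundary_components G phi = 1) \<noteq>
    (a \<in> phi \<and> b \<in> phi \<and> num_boundary_components G (phi - {a, b}) = 1)"
proof -
  have "F \<noteq> {}" using x_flag by blast
  note nbc = num_boundary_components_eq_1_iff[OF this]
  have "num_boundary_components (exchange_ends G x) phi = 1 \<longleftrightarrow>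
      connected_on F (gen_rel F [sub_r0 G phi, exchange_r1 G x])"
    using num_boundary_components_eq_1_iff[of "exchange_ends G x" phi] x_flag by auto
  then show ?thesis
    unfolding nbc
    using connected_on_exchange_both_in_iff connected_on_exchange_one_out_iff
      not_connected_on_degenerate exchange_r1_degenerate
    by (cases "n = a1") auto
qed

end

lemma symdiff_symdiff_cancel: "symdiff (symdiff c B) B = c"
  unfolding symdiff_def by auto

lemma mem_symdiff_iff: "c \<in> symdiff X Y \<longleftrightarrow> (c \<in> X) \<noteq> (c \<in> Y)"
  unfolding symdiff_def by auto

lemma mem_image_symdiff_iff: "c \<in> (\<lambda>phi. symdiff phi B) ` X \<longleftrightarrow> symdiff c B \<in> X"
  by (metis (no_types, lifting) image_iff symdiff_symdiff_cancel)

lemma Dprime_eq: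
  assumes PE: "\<forall>c\<in>P. c \<subseteq> E" and a: "a \<in> E" and b: "b \<in> E" and ab: "a \<noteq> b"
  shows "Dprime (E, P) a b = (E, {c. c \<subseteq> E \<and> (c \<in> P) \<noteq> (a \<in> c \<and> b \<in> c \<and> c - {a, b} \<in> P)})"
proof -
  let ?tau = "\<lambda>phi. symdiff phi {b}"
  define P1 where "P1 = ?tau ` P"
  define S where "S = {phi \<union> {a} | phi. phi \<subseteq> E - {a, b} \<and> phi \<union> {b} \<in> P1}"
  have D: "Dprime (E, P) a b = (E, ?tau ` symdiff P1 S)"
    unfolding Dprime_def twist_def slide_def P1_def S_def by simp
  have tau_b: "?tau (psi \<union> {b}) = psi" if "b \<notin> psi" for psi
    using that unfolding symdiff_def by auto
  have memS: "d \<in> S \<longleftrightarrow> a \<in> d \<and> b \<notin> d \<and> d - {a} \<subseteq> E \<and> d - {a} \<in> P" for d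
  proof
    assume "d \<in> S"
    then obtain psi where psi: "d = psi \<union> {a}" "psi \<subseteq> E - {a, b}" "psi \<union> {b} \<in> P1"
      unfolding S_def by blast
    have "symdiff (psi \<union> {b}) {b} \<in> P" using psi(3) unfolding P1_def mem_image_symdiff_iff .
    moreover have "b \<notin> psi" using psi(2) by blast
    ultimately have "psi \<in> P" "d - {a} = psi" using tau_b psi(1,2) by auto
    then show "a \<in> d \<and> b \<notin> d \<and> d - {a} \<subseteq> E \<and> d - {a} \<in> P" using psi ab by auto
  next
    assume d: "a \<in> d \<and> b \<notin> d \<and> d - {a} \<subseteq> E \<and> d - {a} \<in> P"
    then have "symdiff (d - {a} \<union> {b}) {b} \<in> P" using tau_b[of "d - {a}"] by simp
    then have "d - {a} \<union> {b} \<in> P1" unfolding P1_def mem_image_symdiff_iff .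
    moreover have "d = (d - {a}) \<union> {a}" using d by auto
    ultimately show "d \<in> S" using d unfolding S_def by blast
  qed
  have "c \<in> ?tau ` symdiff P1 S \<longleftrightarrow> c \<subseteq> E \<and> (c \<in> P) \<noteq> (a \<in> c \<and> b \<in> c \<and> c - {a, b} \<in> P)" for c
  proof -
    have "c \<in> ?tau ` symdiff P1 S \<longleftrightarrow> (?tau c \<in> P1) \<noteq> (?tau c \<in> S)"
      by (simp only: mem_image_symdiff_iff mem_symdiff_iff)
    also have "(?tau c \<in> P1) \<longleftrightarrow> c \<in> P"
      unfolding P1_def mem_image_symdiff_iff symdiff_symdiff_cancel ..
    also have "(?tau c \<in> S) \<longleftrightarrow> a \<in> c \<and> b \<in> c \<and> c - {a, b} \<subseteq> E \<and> c - {a, b} \<in> P"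
    proof (cases "b \<in> c")
      case True
      then have "a \<in> ?tau c \<longleftrightarrow> a \<in> c" "b \<notin> ?tau c" "?tau c - {a} = c - {a, b}"
        unfolding symdiff_def using ab by auto
      then show ?thesis unfolding memS using True by simp
    next
      case False
      then have "b \<in> ?tau c" unfolding symdiff_def by auto
      then show ?thesis unfolding memS using False by simp
    qed
    finally have eq: "c \<in> ?tau ` symdiff P1 S \<longleftrightarrow>
      (c \<in> P) \<noteq> (a \<in> c \<and> b \<in> c \<and> c - {a, b} \<subseteq> E \<and> c - {a, b} \<in> P)" .
    show ?thesis
    proof (cases "c \<subseteq> E")
      case False
      then have "c \<notin> P" "\<not> (a \<in> c \<and> b \<in> c \<and> c - {a, b} \<subseteq> E)" using PE a b by blast+
      then show ?thesis using eq False by simp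
    next
      case True
      then have "c - {a, b} \<subseteq> E" by blast
      then show ?thesis using eq True by simp
    qed
  qed
  then have "?tau ` symdiff P1 S = {c. c \<subseteq> E \<and> (c \<in> P) \<noteq> (a \<in> c \<and> b \<in> c \<and> c - {a, b} \<in> P)}"
    by blast
  then show ?thesis using D by simp
qed

theorem theorem4p3:
  fixes G :: "'f rmap" and a b :: "'f set" and x :: 'f
  assumes "ribbon_graph G"
    and "a \<in> edges G" and "b \<in> edges G" and "a \<noteq> b"
    and "x \<in> flags G" and "edge_of G x = a" and "edge_of G (r1 G x) = b"
  shows "delta_matroid_of (exchange_ends G x) = Dprime (delta_matroid_of G) a b"
proof -
  have corner: "corner G x" using assms by unfold_locales auto
  let ?P = "{phi. phi \<subseteq> edges G \<and> num_boundary_components G phi = 1}"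
  have "Dprime (delta_matroid_of G) a b = (edges G,
      {c. c \<subseteq> edges G \<and> (c \<in> ?P) \<noteq> (a \<in> c \<and> b \<in> c \<and> c - {a, b} \<in> ?P)})"
    unfolding delta_matroid_of_def by (rule Dprime_eq) (use assms(2-4) in auto)
  then show ?thesis
    using corner.num_boundary_components_exchange_ends[OF corner] assms(6,7)
    unfolding delta_matroid_of_def by auto
qed

end
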